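(* Let $\bm{A}=[\bm{A}_1\ \bm{A}_2]\in\mathbb{R}^{m\times(n_1+n_2)}$ have full column rank with $\bm{A}_j^\top\bm{A}_j=\bm{I}_j$, $\bm{C}:=\bm{A}_2^\top\bm{A}_1\ne0$, and suppose $r:=\operatorname{rank}(\bm{C})=\min\{n_1,n_2\}$. With $S_{11}:=[1,\infty)\times[1,\infty)$, $\min_{(\gamma_1,\gamma_2)\in S_{11}}\rho(\bm{M}(\gamma_1,\gamma_2))=\dfrac{\sqrt{1-\lambda_r(\bm{C}\bm{C}^\top)}-\sqrt{1-\lambda_1(\bm{C}\bm{C}^\top)}}{\sqrt{1-\lambda_r(\bm{C}\bm{C}^\top)}+\sqrt{1-\lambda_1(\bm{C}\bm{C}^\top)}}.$
   Context: $\rho$: spectral radius; $\lambda_i$: $i$-th largest eigenvalue. $\bm{M}(\gamma_1,\gamma_2)=\begin{bmatrix}(1-\gamma_1)\bm{I}_1&-\gamma_1\bm{C}^\top\\-\gamma_2(1-\gamma_1)\bm{C}&(1-\gamma_2)\bm{I}_2+\gamma_1\gamma_2\bm{C}\bm{C}^\top\end{bmatrix}$, the two-block gradient descent iteration matrix with stepsizes $\gamma_1,\gamma_2$. *)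

theory Defs
  imports "Jordan_Normal_Form.Spectral_Radius" "Jordan_Normal_Form.DL_Rank"
begin

text \<open>For a real symmetric
matrix the characteristic polynomial splits over the reals, so this list has full length.\<close>
definition eigs_desc :: "real mat \<Rightarrow> real list" where
  "eigs_desc A = rev (sorted_list_of_multiset (proots (char_poly A)))"

definition lambda_i :: "real mat \<Rightarrow> nat \<Rightarrow> real" where
  "lambda_i A i = eigs_desc A ! (i - 1)"

text \<open>Two-block gradient descent iteration matrix M(g1,g2), with C of size n2 x n1.\<close>
definition iterM :: "nat \<Rightarrow> nat \<Rightarrow> real mat \<Rightarrow> real \<Rightarrow> real \<Rightarrow> real mat" where
  "iterM n1 n2 C g1 g2 = four_block_mat
     ((1 - g1) \<cdot>\<^sub>m 1\<^sub>m n1)                 ((- g1) \<cdot>\<^sub>m transpose_mat C)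
     ((- (g2 * (1 - g1))) \<cdot>\<^sub>m C)        ((1 - g2) \<cdot>\<^sub>m 1\<^sub>m n2 + (g1 * g2) \<cdot>\<^sub>m (C * transpose_mat C))"

definition rho :: "real mat \<Rightarrow> real" where
  "rho M = spectral_radius (map_mat complex_of_real M)"

definition hcat :: "real mat \<Rightarrow> real mat \<Rightarrow> real mat" where
  "hcat A1 A2 = mat (dim_row A1) (dim_col A1 + dim_col A2)
     (\<lambda>(i,j). if j < dim_col A1 then A1 $$ (i,j) else A2 $$ (i, j - dim_col A1))"

end

theory Submission
  imports Defs
begin

text \<open>Write \<open>d = (g\<^sub>1-1)(g\<^sub>2-1)\<close> and \<open>P = g\<^sub>1g\<^sub>2\<close>. Eliminating the first block of an eigenvector of
  \<open>M(g\<^sub>1,g\<^sub>2)\<close> shows that an eigenvalue \<open>z\<close> is either \<open>0\<close>, or \<open>1-g\<^sub>1\<close> resp. \<open>1-g\<^sub>2\<close> (only possible when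
  \<open>C\<close> resp. \<open>C\<^sup>T\<close> has a kernel), or a root of \<open>z\<^sup>2 - (d+1-P(1-\<lambda>))z + d\<close> for a nonzero eigenvalue \<open>\<lambda>\<close>
  of \<open>CC\<^sup>T\<close>; conversely, both roots of this quadratic are eigenvalues of \<open>M\<close>.

  Since \<open>\<lambda>\<^sub>1 < 1\<close> by the full rank of \<open>[A\<^sub>1 A\<^sub>2]\<close>, put \<open>a = 1-\<lambda>\<^sub>1\<close> and \<open>b = 1-\<lambda>\<^sub>r\<close>. If the roots of the
  quadratics for \<open>\<lambda>\<^sub>1\<close> and \<open>\<lambda>\<^sub>r\<close> lie in the disc of radius \<open>R\<close>, elementary estimates on their coefficients
  give \<open>R \<ge> v = (\<surd>b-\<surd>a)/(\<surd>b+\<surd>a)\<close>. Conversely, \<open>P = (1+v)\<^sup>2/b\<close> and \<open>d = v\<^sup>2\<close> make the discriminant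
  of every quadratic with \<open>\<lambda> \<in> [\<lambda>\<^sub>r, \<lambda>\<^sub>1]\<close> nonpositive, so all their roots have modulus \<open>v\<close>; of the
  two factors \<open>g\<^sub>i - 1\<close> of \<open>v\<^sup>2\<close> the one at most \<open>v\<close> is put on the block whose trivial eigenvalue the
  rank condition \<open>r = min(n\<^sub>1,n\<^sub>2)\<close> does not exclude.\<close>

subsection \<open>Quadratics\<close>

lemma cmod_root_quadratic_nonpos_disc:
  fixes z :: complex and t d :: real
  assumes eq: "z^2 - of_real t * z + of_real d = 0" and disc: "t^2 \<le> 4*d"
  shows "cmod z = sqrt d"
proof -
  obtain p q where z: "z = Complex p q" by (cases z)
  have "Re (z^2 - of_real t * z + of_real d) = p^2 - q^2 - t*p + d"
    by (simp add: z power2_eq_square)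
  with eq have e1: "p^2 - q^2 - t*p + d = 0" by simp
  have "Im (z^2 - of_real t * z + of_real d) = 2*p*q - t*q"
    by (simp add: z power2_eq_square)
  with eq have e2: "2*p*q - t*q = 0" by simp
  have "p^2 + q^2 = d"
  proof (cases "q = 0")
    case True
    with e1 have "(p - t/2)^2 = t^2/4 - d" by (simp add: power2_eq_square algebra_simps)
    moreover have "(p - t/2)^2 \<ge> 0" by simp
    ultimately have "(p - t/2)^2 = 0" using disc by linarith
    then have tp: "t = 2*p" by simp
    have "p^2 - q^2 - t*p + d = d - p*p" using True tp by (simp add: power2_eq_square algebra_simps)
    with True e1 show ?thesis by (simp add: power2_eq_square)
  next
    case False
    from e2 have "(2*p - t)*q = 0" by (simp add: algebra_simps)
    with False have tp: "t = 2*p" by simp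
    have "p^2 - q^2 - t*p + d = d - p*p - q*q" using tp by (simp add: power2_eq_square algebra_simps)
    with e1 show ?thesis by (simp add: power2_eq_square)
  qed
  then show ?thesis unfolding z cmod_def by simp
qed

lemma real_roots_in_interval_imp:
  fixes z1 z2 R :: real
  assumes z1: "\<bar>z1\<bar> \<le> R" and z2: "\<bar>z2\<bar> \<le> R"
  shows "z1 * z2 \<le> R^2 \<and> \<bar>z1 + z2\<bar> * R \<le> R^2 + z1 * z2 \<and> \<bar>z1 + z2\<bar> \<le> 2*R"
proof -
  have "\<bar>z1 * z2\<bar> \<le> R * R" unfolding abs_mult by (rule mult_mono) (use z1 z2 in auto)
  then have "z1 * z2 \<le> R^2" by (simp add: power2_eq_square)
  moreover have "(R - z1) * (R - z2) \<ge> 0" "(R + z1) * (R + z2) \<ge> 0" using z1 z2 by simp_all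
  then have "(z1 + z2) * R \<le> R^2 + z1 * z2" "- (z1 + z2) * R \<le> R^2 + z1 * z2"
    by (simp_all add: power2_eq_square algebra_simps)
  ultimately show ?thesis using z1 z2 by (cases "z1 + z2 \<ge> 0") auto
qed

lemma complex_roots_in_disc_imp:
  fixes t d R :: real
  assumes disc: "t^2 \<le> 4*d" and R: "sqrt d \<le> R"
  shows "d \<le> R^2 \<and> \<bar>t\<bar> * R \<le> R^2 + d \<and> \<bar>t\<bar> \<le> 2*R"
proof -
  have d0: "d \<ge> 0" using disc by (smt (verit) zero_le_power2)
  have R0: "R \<ge> 0" using R d0 by (smt (verit) real_sqrt_ge_zero)
  have "\<bar>t\<bar>^2 \<le> (2 * sqrt d)^2" using disc d0 by (simp add: power2_eq_square)
  then have t: "\<bar>t\<bar> \<le> 2 * sqrt d" by (rule power2_le_imp_le) (simp add: d0)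
  have "\<bar>t\<bar> * R \<le> 2 * sqrt d * R" using t R0 by (simp add: mult_right_mono)
  also have "\<dots> \<le> R^2 + d"
    using d0 zero_le_power2[of "R - sqrt d"] by (simp add: power2_eq_square algebra_simps)
  finally show ?thesis using R d0 t by (smt (verit) real_sqrt_le_iff real_sqrt_pow2 power_mono)
qed

lemma quadratic_roots_in_disc_imp:
  fixes t d R :: real
  assumes roots: "\<And>z::complex. z^2 - of_real t * z + of_real d = 0 \<Longrightarrow> cmod z \<le> R"
  shows "d \<le> R^2 \<and> \<bar>t\<bar> * R \<le> R^2 + d \<and> \<bar>t\<bar> \<le> 2*R"
proof (cases "4*d \<le> t^2")
  case True
  define s where "s = sqrt (t^2 - 4*d)"
  have s2: "s^2 = t^2 - 4*d" using True unfolding s_def by simp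
  have real_root: "\<bar>w\<bar> \<le> R" if "w^2 - t*w + d = 0" for w
    using that roots[of "of_real w"] by (metis norm_of_real of_real_0 of_real_add of_real_diff of_real_mult of_real_power)
  have "\<bar>(t + s)/2\<bar> \<le> R" "\<bar>(t - s)/2\<bar> \<le> R"
    by (rule real_root, use s2 in \<open>simp add: power2_eq_square field_simps\<close>)+
  from real_roots_in_interval_imp[OF this] show ?thesis using s2 by (simp add: power2_eq_square field_simps)
next
  case False
  define z where "z = Complex (t/2) (sqrt (4*d - t^2) / 2)"
  have "z^2 - of_real t * z + of_real d = 0"
    unfolding z_def using False by (simp add: complex_eq_iff power2_eq_square field_simps)
  with roots cmod_root_quadratic_nonpos_disc[OF this] False have "sqrt d \<le> R" by fastforce
  with False show ?thesis by (intro complex_roots_in_disc_imp) auto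
qed

lemma scaled_interval_bound:
  fixes a b d P R :: real
  assumes R: "0 < R" "R < 1" "d \<le> R^2" and P: "0 < P"
    and lo: "(1-R)*(R-d) \<le> P*a*R" and hi: "P*b*R \<le> (1+R)*(R+d)"
  shows "b*(1-R)^2 \<le> a*(1+R)^2"
proof -
  have "b*(1-R)^2*(P*R) \<le> (1+R)*(R+d)*(1-R)^2"
    using mult_right_mono[OF hi, of "(1-R)^2"] by (simp add: algebra_simps)
  also have "(1+R)*(R+d)*(1-R)^2 \<le> (1-R)*(R-d)*(1+R)^2"
  proof -
    have "(1-R)*(R-d)*(1+R)^2 - (1+R)*(R+d)*(1-R)^2 = (1-R)*(1+R)*(2*R^2 - 2*d)"
      by (simp add: power2_eq_square algebra_simps)
    moreover have "(1-R)*(1+R)*(2*R^2 - 2*d) \<ge> 0" using R by simp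
    ultimately show ?thesis by linarith
  qed
  also have "(1-R)*(R-d)*(1+R)^2 \<le> a*(1+R)^2*(P*R)"
    using mult_right_mono[OF lo, of "(1+R)^2"] by (simp add: algebra_simps)
  finally show ?thesis using P R by simp
qed

lemma convergence_rate_le_of_quadratic_bounds:
  fixes a b R P d :: real
  assumes a0: "a > 0" and ab: "a \<le> b" and R0: "R \<ge> 0" and P0: "P > 0"
    and dR: "d \<le> R^2"
    and ha1: "\<bar>d + 1 - P*a\<bar> * R \<le> R^2 + d" and ha2: "\<bar>d + 1 - P*a\<bar> \<le> 2*R"
    and hb1: "\<bar>d + 1 - P*b\<bar> * R \<le> R^2 + d" and hb2: "\<bar>d + 1 - P*b\<bar> \<le> 2*R"
  shows "(sqrt b - sqrt a)/(sqrt b + sqrt a) \<le> R"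
proof -
  have sa: "sqrt a > 0" using a0 by simp
  have den: "sqrt b + sqrt a > 0" using sa ab by (smt (verit) real_sqrt_le_mono)
  consider "R = 0" | "R \<ge> 1" | "0 < R" "R < 1" using R0 by linarith
  then show ?thesis
  proof cases
    case 1
    with ha2 hb2 P0 have "a = b" by simp
    then show ?thesis using 1 by simp
  next
    case 2
    have "(sqrt b - sqrt a)/(sqrt b + sqrt a) \<le> 1" using sa den by (simp add: divide_le_eq_1)
    then show ?thesis using 2 by simp
  next
    case 3
    have "(d + 1 - P*a) * R \<le> R^2 + d" "-(d + 1 - P*b) * R \<le> R^2 + d"
      using ha1 hb1 3 by (smt (verit, best) abs_ge_self abs_ge_minus_self mult_right_mono)+
    then have "(1-R)*(R-d) \<le> P*a*R" "P*b*R \<le> (1+R)*(R+d)"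
      by (simp_all add: power2_eq_square algebra_simps)
    from scaled_interval_bound[OF 3 dR P0 this] 
    have "sqrt (b*(1-R)^2) \<le> sqrt (a*(1+R)^2)" by simp
    then have "sqrt b * (1-R) \<le> sqrt a * (1+R)" using 3 by (simp add: real_sqrt_mult)
    then have "sqrt b - sqrt a \<le> R * (sqrt b + sqrt a)" by (simp add: algebra_simps)
    then show ?thesis using den by (simp add: divide_le_eq)
  qed
qed

lemma exists_nonneg_factors_sum_product:
  fixes s v :: real
  assumes v0: "0 \<le> v" and s2v: "2*v \<le> s"
  obtains x y where "0 \<le> x" "x \<le> v" "0 \<le> y" "x*y = v^2" "x + y = s"
proof -
  have "(2*v)^2 \<le> s^2" using s2v v0 by (intro power_mono) auto
  then have disc: "s^2 - 4*v^2 \<ge> 0" by (simp add: power2_eq_square)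
  define D where "D = sqrt (s^2 - 4*v^2)"
  have D2: "D^2 = s^2 - 4*v^2" and D0: "D \<ge> 0" using disc unfolding D_def by auto
  have Ds: "D \<le> s"
  proof -
    have "D^2 \<le> s^2" using D2 by simp
    then show ?thesis using s2v v0 D0 by (meson power2_le_imp_le order_trans zero_le_mult_iff zero_le_numeral)
  qed
  define x where "x = (s - D)/2"
  define y where "y = (s + D)/2"
  have x0: "x \<ge> 0" and y0: "y \<ge> 0" and xley: "x \<le> y" using Ds D0 unfolding x_def y_def by simp_all
  have "x*y = (s^2 - D^2)/4" unfolding x_def y_def by (simp add: power2_eq_square field_simps)
  then have xy: "x*y = v^2" using D2 by simp
  have "x*x \<le> x*y" using xley x0 by (simp add: mult_left_mono)
  then have "x^2 \<le> v^2" using xy by (simp add: power2_eq_square)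
  then have "x \<le> v" using v0 by (rule power2_le_imp_le)
  moreover have "x + y = s" unfolding x_def y_def by (simp add: field_simps)
  ultimately show ?thesis using that x0 y0 xy by blast
qed

text \<open>The scaling \<open>P = (1+v)\<^sup>2/b\<close> maps \<open>[a, b]\<close> onto \<open>[(1-v)\<^sup>2, (1+v)\<^sup>2]\<close>, where the quadratic
  \<open>z\<^sup>2 - (v\<^sup>2 + 1 - P\<mu>) z + v\<^sup>2\<close> has nonpositive discriminant; \<open>P = (1+x)(1+y)\<close> with \<open>xy = v\<^sup>2\<close>.\<close>
lemma exists_factors_attaining_convergence_rate:
  fixes a b :: real
  assumes a0: "a > 0" and ab: "a \<le> b" and b1: "b \<le> 1"
  defines "v \<equiv> (sqrt b - sqrt a)/(sqrt b + sqrt a)"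
  shows "\<exists>x y. 0 \<le> x \<and> x \<le> v \<and> 0 \<le> y \<and> x*y = v^2 \<and>
     (\<forall>\<mu>. a \<le> \<mu> \<longrightarrow> \<mu> \<le> b \<longrightarrow> (v^2 + 1 - (1+x)*(1+y)*\<mu>)^2 \<le> 4*v^2)"
proof -
  define sa where "sa = sqrt a"
  define sb where "sb = sqrt b"
  have sa0: "sa > 0" using a0 unfolding sa_def by simp
  have sab: "sa \<le> sb" using ab unfolding sa_def sb_def by simp
  have sb0: "sb > 0" using sa0 sab by linarith
  have sa2: "sa^2 = a" and sb2: "sb^2 = b" using a0 ab unfolding sa_def sb_def by auto
  have vdef: "v = (sb - sa)/(sb + sa)" unfolding v_def sa_def sb_def ..
  have v0: "v \<ge> 0" using sab sa0 unfolding vdef by simp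
  define P where "P = (1+v)^2 / b"
  have P0: "P \<ge> 0" unfolding P_def using sb0 sb2 by auto
  have Pb: "P * b = (1+v)^2" unfolding P_def using sb0 sb2 by auto
  have Pa: "P * a = (1-v)^2"
  proof -
    have "(1+v)*sa = (1-v)*sb" unfolding vdef using sa0 sb0 by (simp add: field_simps)
    then have "((1+v)*sa)^2 = ((1-v)*sb)^2" by simp
    then have "(1+v)^2 * a = (1-v)^2 * b" unfolding sa2[symmetric] sb2[symmetric] by (simp add: power_mult_distrib)
    then show ?thesis unfolding P_def using sb0 sb2 by (auto simp: field_simps)
  qed
  have "(1+v)^2 * b \<le> (1+v)^2 * 1" using b1 by (intro mult_left_mono) auto
  then have "P \<ge> (1+v)^2" using Pb by (smt (verit) ab a0 mult_le_cancel_left_pos mult.commute)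
  then have "2*v \<le> P - 1 - v^2" by (simp add: power2_eq_square algebra_simps)
  then obtain x y where xy: "0 \<le> x" "x \<le> v" "0 \<le> y" "x*y = v^2" "x + y = P - 1 - v^2"
    using exists_nonneg_factors_sum_product[OF v0] by blast
  have P_xy: "(1+x)*(1+y) = P" using xy(4,5) by (simp add: algebra_simps)
  have "(v^2 + 1 - (1+x)*(1+y)*\<mu>)^2 \<le> 4*v^2" if "a \<le> \<mu>" "\<mu> \<le> b" for \<mu>
  proof -
    have "P*a \<le> P*\<mu>" "P*\<mu> \<le> P*b" using that P0 by (auto intro: mult_left_mono)
    then have "\<bar>v^2 + 1 - P*\<mu>\<bar> \<le> 2*v"
      using Pa Pb by (simp add: power2_eq_square algebra_simps abs_le_iff)
    then have "\<bar>v^2 + 1 - P*\<mu>\<bar>^2 \<le> (2*v)^2" by (intro power_mono) auto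
    then show ?thesis unfolding P_xy by (simp add: power2_eq_square)
  qed
  with xy show ?thesis by blast
qed

subsection \<open>The complexified iteration matrix\<close>

abbreviation cmat :: "real mat \<Rightarrow> complex mat" where
  "cmat A \<equiv> map_mat complex_of_real A"

definition iterMc :: "nat \<Rightarrow> nat \<Rightarrow> complex mat \<Rightarrow> complex \<Rightarrow> complex \<Rightarrow> complex mat" where
  "iterMc n1 n2 C g1 g2 = four_block_mat
     ((1 - g1) \<cdot>\<^sub>m 1\<^sub>m n1)                 ((- g1) \<cdot>\<^sub>m transpose_mat C)
     ((- (g2 * (1 - g1))) \<cdot>\<^sub>m C)        ((1 - g2) \<cdot>\<^sub>m 1\<^sub>m n2 + (g1 * g2) \<cdot>\<^sub>m (C * transpose_mat C))"

lemma iterMc_carrier: "C \<in> carrier_mat n2 n1 \<Longrightarrow> iterMc n1 n2 C g1 g2 \<in> carrier_mat (n1+n2) (n1+n2)"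
  unfolding iterMc_def by (rule four_block_carrier_mat) auto

lemma of_real_gram: "B \<in> carrier_mat k l \<Longrightarrow> cmat (B * B\<^sup>T) = cmat B * (cmat B)\<^sup>T"
  by (simp add: of_real_hom.mat_hom_mult[of B k l "B\<^sup>T" k] map_mat_transpose)

lemma of_real_iterM:
  assumes C: "C \<in> carrier_mat n2 n1"
  shows "cmat (iterM n1 n2 C g1 g2) = iterMc n1 n2 (cmat C) (of_real g1) (of_real g2)"
proof -
  have lower_right: "cmat ((1-g2) \<cdot>\<^sub>m 1\<^sub>m n2 + (g1*g2) \<cdot>\<^sub>m (C * C\<^sup>T)) =
      (1 - of_real g2) \<cdot>\<^sub>m 1\<^sub>m n2 + (of_real g1 * of_real g2) \<cdot>\<^sub>m (cmat C * (cmat C)\<^sup>T)"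
    unfolding of_real_gram[OF C, symmetric] using C by (auto intro!: eq_matI)
  show ?thesis
    unfolding iterM_def iterMc_def
    apply (subst map_four_block_mat[of _ n1 n1 _ n2 _ n2])
    using C apply auto[4]
    apply (intro cong_four_block_mat)
    using C apply (auto intro!: eq_matI simp: map_mat_transpose)[3]
    by (rule lower_right)
qed

lemma rho_iterM:
  "C \<in> carrier_mat n2 n1 \<Longrightarrow>
   rho (iterM n1 n2 C g1 g2) = spectral_radius (iterMc n1 n2 (cmat C) (of_real g1) (of_real g2))"
  unfolding rho_def by (simp add: of_real_iterM)

lemma smult_mat_mult_vec:
  assumes "A \<in> carrier_mat nr nc" "v \<in> carrier_vec nc"
  shows "(k \<cdot>\<^sub>m A) *\<^sub>v v = k \<cdot>\<^sub>v (A *\<^sub>v v)"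
  using assms by (intro eq_vecI) (auto simp: scalar_prod_def sum_distrib_left mult.assoc)

lemma mult_mat_zero_vec [simp]:
  "A \<in> carrier_mat nr nc \<Longrightarrow> A *\<^sub>v 0\<^sub>v nc = (0\<^sub>v nr :: 'a :: comm_ring vec)"
  by (intro eq_vecI) (auto simp: scalar_prod_def)

lemma smult_zero_vec [simp]: "a \<cdot>\<^sub>v 0\<^sub>v n = (0\<^sub>v n :: 'a :: mult_zero vec)"
  by (intro eq_vecI) auto

lemma smult_vec_eq_zero_iff:
  "v \<in> carrier_vec n \<Longrightarrow> (a \<cdot>\<^sub>v v = 0\<^sub>v n) \<longleftrightarrow> a = 0 \<or> v = (0\<^sub>v n :: 'a :: idom vec)"
  by (auto simp: vec_eq_iff)

lemma append_vec_eq_zero_iff: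
  assumes "x \<in> carrier_vec n1" "y \<in> carrier_vec n2"
  shows "x @\<^sub>v y = 0\<^sub>v (n1+n2) \<longleftrightarrow> x = 0\<^sub>v n1 \<and> y = (0\<^sub>v n2 :: 'a :: zero vec)"
proof -
  have "0\<^sub>v (n1+n2) = 0\<^sub>v n1 @\<^sub>v (0\<^sub>v n2 :: 'a vec)" by (intro eq_vecI) auto
  then show ?thesis using assms by simp
qed

lemma iterMc_mult_append_vec:
  fixes C :: "complex mat"
  assumes C: "C \<in> carrier_mat n2 n1" and x: "x \<in> carrier_vec n1" and y: "y \<in> carrier_vec n2"
  shows "iterMc n1 n2 C g1 g2 *\<^sub>v (x @\<^sub>v y) =
     ((1-g1) \<cdot>\<^sub>v x + (-g1) \<cdot>\<^sub>v (C\<^sup>T *\<^sub>v y)) @\<^sub>v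
     ((-(g2*(1-g1))) \<cdot>\<^sub>v (C *\<^sub>v x) + ((1-g2) \<cdot>\<^sub>v y + (g1*g2) \<cdot>\<^sub>v (C *\<^sub>v (C\<^sup>T *\<^sub>v y))))"
proof -
  have CT: "C\<^sup>T \<in> carrier_mat n1 n2" and CC: "C * C\<^sup>T \<in> carrier_mat n2 n2" using C by auto
  show ?thesis
    unfolding iterMc_def
    apply (subst four_block_mat_mult_vec[of _ n1 n1 _ n2 _ n2])
    using C x y apply auto[6]
    using C CT CC x y
    by (simp add: smult_mat_mult_vec[OF one_carrier_mat x] smult_mat_mult_vec[OF CC y]
      add_mult_distrib_mat_vec[OF smult_carrier_mat[OF one_carrier_mat] smult_carrier_mat[OF CC] y]
      smult_mat_mult_vec[OF one_carrier_mat y] assoc_mult_mat_vec[OF C CT y]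
      smult_mat_mult_vec[OF CT y] smult_mat_mult_vec[OF C x])
qed

lemma iterMc_eigen_iff:
  fixes C :: "complex mat"
  assumes C: "C \<in> carrier_mat n2 n1" and x: "x \<in> carrier_vec n1" and y: "y \<in> carrier_vec n2"
  shows "iterMc n1 n2 C g1 g2 *\<^sub>v (x @\<^sub>v y) = z \<cdot>\<^sub>v (x @\<^sub>v y) \<longleftrightarrow>
    (1-g1-z) \<cdot>\<^sub>v x = g1 \<cdot>\<^sub>v (C\<^sup>T *\<^sub>v y) \<and>
    (1-g2-z) \<cdot>\<^sub>v y + (g1*g2) \<cdot>\<^sub>v (C *\<^sub>v (C\<^sup>T *\<^sub>v y)) = (g2*(1-g1)) \<cdot>\<^sub>v (C *\<^sub>v x)"
proof -
  have split: "z \<cdot>\<^sub>v (x @\<^sub>v y) = (z \<cdot>\<^sub>v x) @\<^sub>v (z \<cdot>\<^sub>v y)"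
    using x y by (intro eq_vecI) auto
  have "iterMc n1 n2 C g1 g2 *\<^sub>v (x @\<^sub>v y) = z \<cdot>\<^sub>v (x @\<^sub>v y) \<longleftrightarrow>
    (1-g1) \<cdot>\<^sub>v x + (-g1) \<cdot>\<^sub>v (C\<^sup>T *\<^sub>v y) = z \<cdot>\<^sub>v x \<and>
    (-(g2*(1-g1))) \<cdot>\<^sub>v (C *\<^sub>v x) + ((1-g2) \<cdot>\<^sub>v y + (g1*g2) \<cdot>\<^sub>v (C *\<^sub>v (C\<^sup>T *\<^sub>v y))) = z \<cdot>\<^sub>v y"
    unfolding iterMc_mult_append_vec[OF C x y] split by (intro append_vec_eq) (use C x y in auto)
  also have "\<dots> \<longleftrightarrow> (1-g1-z) \<cdot>\<^sub>v x = g1 \<cdot>\<^sub>v (C\<^sup>T *\<^sub>v y) \<and>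
    (1-g2-z) \<cdot>\<^sub>v y + (g1*g2) \<cdot>\<^sub>v (C *\<^sub>v (C\<^sup>T *\<^sub>v y)) = (g2*(1-g1)) \<cdot>\<^sub>v (C *\<^sub>v x)"
    using C x y by (auto simp: vec_eq_iff algebra_simps)
  finally show ?thesis .
qed

text \<open>The hypotheses are the two block rows of \<open>M (x, y) = z (x, y)\<close>; the first one is used to
  eliminate \<open>x\<close>.\<close>
lemma iterMc_eigen_gram:
  fixes C :: "complex mat"
  assumes C: "C \<in> carrier_mat n2 n1" and x: "x \<in> carrier_vec n1" and y: "y \<in> carrier_vec n2"
    and first: "(1-g1-z) \<cdot>\<^sub>v x = g1 \<cdot>\<^sub>v (C\<^sup>T *\<^sub>v y)"
    and second: "(1-g2-z) \<cdot>\<^sub>v y + (g1*g2) \<cdot>\<^sub>v (C *\<^sub>v (C\<^sup>T *\<^sub>v y)) = (g2*(1-g1)) \<cdot>\<^sub>v (C *\<^sub>v x)"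
  shows "(g1*g2*z) \<cdot>\<^sub>v (C *\<^sub>v (C\<^sup>T *\<^sub>v y)) = ((z-1+g1)*(z-1+g2)) \<cdot>\<^sub>v y"
proof (rule eq_vecI)
  fix i assume "i < dim_vec (((z-1+g1)*(z-1+g2)) \<cdot>\<^sub>v y)"
  then have i: "i < n2" using y by simp
  define s where "s = (C *\<^sub>v (C\<^sup>T *\<^sub>v y)) $ i"
  define w where "w = (C *\<^sub>v x) $ i"
  have "(1-g1-z) \<cdot>\<^sub>v (C *\<^sub>v x) = g1 \<cdot>\<^sub>v (C *\<^sub>v (C\<^sup>T *\<^sub>v y))"
    using arg_cong[OF first, of "\<lambda>v. C *\<^sub>v v"] C x y by (simp add: mult_mat_vec)
  from arg_cong[OF this, of "\<lambda>v. v $ i"] have e1: "(1-g1-z) * w - g1 * s = 0"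
    using i C unfolding s_def w_def by simp
  have e2: "(1-g2-z) * y$i + g1*g2 * s - g2*(1-g1) * w = 0"
    using arg_cong[OF second, of "\<lambda>v. v $ i"] i C y unfolding s_def w_def by simp
  have "g1*g2*z * s - (z-1+g1)*(z-1+g2) * y$i =
      - ((1-g1-z) * ((1-g2-z) * y$i + g1*g2 * s - g2*(1-g1) * w) + g2*(1-g1) * ((1-g1-z) * w - g1 * s))"
    by (simp add: algebra_simps)
  then show "((g1*g2*z) \<cdot>\<^sub>v (C *\<^sub>v (C\<^sup>T *\<^sub>v y))) $ i = (((z-1+g1)*(z-1+g2)) \<cdot>\<^sub>v y) $ i"
    using e1 e2 i C y unfolding s_def by simp
qed (use C y in auto)

lemma eigenvalue_iterMcI:
  fixes C :: "complex mat"
  assumes C: "C \<in> carrier_mat n2 n1" and u: "u \<in> carrier_vec n2"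
    and eig: "C *\<^sub>v (C\<^sup>T *\<^sub>v u) = lam \<cdot>\<^sub>v u" and nz: "C\<^sup>T *\<^sub>v u \<noteq> 0\<^sub>v n1"
    and g1: "g1 \<noteq> 0" and quad: "(z-1+g1)*(z-1+g2) = g1*g2*lam*z"
  shows "eigenvalue (iterMc n1 n2 C g1 g2) z"
proof -
  define p where "p = C\<^sup>T *\<^sub>v u"
  have p: "p \<in> carrier_vec n1" unfolding p_def using C u by auto
  define x where "x = g1 \<cdot>\<^sub>v p"
  define y where "y = (1-g1-z) \<cdot>\<^sub>v u"
  have x: "x \<in> carrier_vec n1" and y: "y \<in> carrier_vec n2" unfolding x_def y_def using p u by auto
  have CTy: "C\<^sup>T *\<^sub>v y = (1-g1-z) \<cdot>\<^sub>v p" unfolding y_def p_def using C u by (simp add: mult_mat_vec)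
  have Cx: "C *\<^sub>v x = (g1 * lam) \<cdot>\<^sub>v u"
    unfolding x_def using C p u eig by (simp add: mult_mat_vec smult_smult_assoc p_def)
  have CCy: "C *\<^sub>v (C\<^sup>T *\<^sub>v y) = ((1-g1-z) * lam) \<cdot>\<^sub>v u"
    unfolding CTy using C p u eig by (simp add: mult_mat_vec smult_smult_assoc p_def)
  have coeff: "(1-g2-z) * (1-g1-z) + g1*g2 * ((1-g1-z) * lam) = g2*(1-g1) * (g1 * lam)"
  proof -
    have "(1-g2-z) * (1-g1-z) + g1*g2 * ((1-g1-z) * lam) - g2*(1-g1) * (g1 * lam)
        = (z-1+g1)*(z-1+g2) - g1*g2*lam*z" by (simp add: algebra_simps)
    then show ?thesis using quad by simp
  qed
  have "(1-g1-z) \<cdot>\<^sub>v x = g1 \<cdot>\<^sub>v (C\<^sup>T *\<^sub>v y)"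
    unfolding CTy x_def by (simp add: smult_smult_assoc mult.commute)
  moreover have "(1-g2-z) \<cdot>\<^sub>v y + (g1*g2) \<cdot>\<^sub>v (C *\<^sub>v (C\<^sup>T *\<^sub>v y))
      = ((1-g2-z) * (1-g1-z) + g1*g2 * ((1-g1-z) * lam)) \<cdot>\<^sub>v u"
    unfolding CCy by (simp add: y_def smult_smult_assoc add_smult_distrib_vec)
  moreover have "\<dots> = (g2*(1-g1)) \<cdot>\<^sub>v (C *\<^sub>v x)"
    unfolding Cx coeff by (simp add: smult_smult_assoc)
  ultimately have "iterMc n1 n2 C g1 g2 *\<^sub>v (x @\<^sub>v y) = z \<cdot>\<^sub>v (x @\<^sub>v y)"
    unfolding iterMc_eigen_iff[OF C x y] by simp
  moreover have "x @\<^sub>v y \<noteq> 0\<^sub>v (n1+n2)"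
  proof
    assume "x @\<^sub>v y = 0\<^sub>v (n1+n2)"
    then have "x = 0\<^sub>v n1" using x y by (simp add: append_vec_eq_zero_iff)
    with g1 p nz show False unfolding x_def p_def by (simp add: smult_vec_eq_zero_iff)
  qed
  ultimately show ?thesis unfolding eigenvalue_def eigenvector_def using x y C
    by (intro exI[of _ "x @\<^sub>v y"]) (auto simp: iterMc_def)
qed

subsection \<open>Real matrices acting on complex vectors\<close>

lemma Re_of_real_mat_mult_vec:
  assumes "B \<in> carrier_mat k l" "x \<in> carrier_vec l"
  shows "map_vec Re (cmat B *\<^sub>v x) = B *\<^sub>v map_vec Re x"
  using assms by (intro eq_vecI) (auto simp: scalar_prod_def Re_sum)

lemma Im_of_real_mat_mult_vec:
  assumes "B \<in> carrier_mat k l" "x \<in> carrier_vec l"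
  shows "map_vec Im (cmat B *\<^sub>v x) = B *\<^sub>v map_vec Im x"
  using assms by (intro eq_vecI) (auto simp: scalar_prod_def Im_sum)

lemma of_real_mat_kernel_nontrivialE:
  assumes B: "B \<in> carrier_mat k l" and x: "x \<in> carrier_vec l" "x \<noteq> 0\<^sub>v l"
    and Bx: "cmat B *\<^sub>v x = 0\<^sub>v k"
  obtains v where "v \<in> carrier_vec l" "v \<noteq> 0\<^sub>v l" "B *\<^sub>v v = 0\<^sub>v k"
proof -
  have zero: "map_vec f (0\<^sub>v k) = 0\<^sub>v k" if "f 0 = 0" for f :: "complex \<Rightarrow> real"
    using that by (intro eq_vecI) auto
  have "B *\<^sub>v map_vec Re x = 0\<^sub>v k" "B *\<^sub>v map_vec Im x = 0\<^sub>v k"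
    using Re_of_real_mat_mult_vec[OF B x(1)] Im_of_real_mat_mult_vec[OF B x(1)] Bx zero by auto
  moreover have "map_vec Re x \<noteq> 0\<^sub>v l \<or> map_vec Im x \<noteq> 0\<^sub>v l"
    using x by (auto simp: vec_eq_iff complex_eq_iff)
  moreover have "map_vec Re x \<in> carrier_vec l" "map_vec Im x \<in> carrier_vec l" using x(1) by auto
  ultimately show ?thesis using that by blast
qed

lemma conjugate_of_real_mat_mult_vec:
  assumes B: "B \<in> carrier_mat k l" and y: "y \<in> carrier_vec l"
  shows "conjugate (cmat B *\<^sub>v y) = cmat B *\<^sub>v conjugate y"
  using assms by (intro eq_vecI) (auto simp: scalar_prod_def)

lemma of_real_gram_form:
  assumes B: "B \<in> carrier_mat k l" and y: "y \<in> carrier_vec k"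
  shows "conjugate y \<bullet> (cmat B *\<^sub>v ((cmat B)\<^sup>T *\<^sub>v y)) = ((cmat B)\<^sup>T *\<^sub>v y) \<bullet>c ((cmat B)\<^sup>T *\<^sub>v y)"
proof -
  define w where "w = (cmat B)\<^sup>T *\<^sub>v y"
  have w: "w \<in> carrier_vec l" unfolding w_def using B y by auto
  have "conjugate y \<bullet> (cmat B *\<^sub>v w) = ((cmat B)\<^sup>T *\<^sub>v conjugate y) \<bullet> w"
    using transpose_vec_mult_scalar[of "cmat B" k l w "conjugate y"] B w y by simp
  also have "(cmat B)\<^sup>T *\<^sub>v conjugate y = conjugate w"
    unfolding w_def map_mat_transpose
    by (rule conjugate_of_real_mat_mult_vec[symmetric, of _ l k]) (use B y in auto)
  also have "conjugate w \<bullet> w = w \<bullet>c w" using conjugate_vec_sprod_comm[OF w w] by simp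
  finally show ?thesis unfolding w_def .
qed

lemma of_real_gram_kernel:
  assumes B: "B \<in> carrier_mat k l" and y: "y \<in> carrier_vec k"
    and eq: "cmat B *\<^sub>v ((cmat B)\<^sup>T *\<^sub>v y) = 0\<^sub>v k"
  shows "(cmat B)\<^sup>T *\<^sub>v y = 0\<^sub>v l"
proof -
  have "((cmat B)\<^sup>T *\<^sub>v y) \<bullet>c ((cmat B)\<^sup>T *\<^sub>v y) = 0"
    using of_real_gram_form[OF B y] eq y by simp
  then show ?thesis using conjugate_square_eq_0_vec[of "(cmat B)\<^sup>T *\<^sub>v y" l] B y by simp
qed

lemma of_real_gram_eigenvalue_real_nonneg:
  assumes B: "B \<in> carrier_mat k l" and y: "y \<in> carrier_vec k" "y \<noteq> 0\<^sub>v k"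
    and eq: "cmat B *\<^sub>v ((cmat B)\<^sup>T *\<^sub>v y) = lam \<cdot>\<^sub>v y"
  shows "Im lam = 0" "Re lam \<ge> 0"
proof -
  define w where "w = (cmat B)\<^sup>T *\<^sub>v y"
  have "w \<bullet>c w = conjugate y \<bullet> (lam \<cdot>\<^sub>v y)"
    using of_real_gram_form[OF B y(1)] eq unfolding w_def by simp
  also have "\<dots> = lam * (y \<bullet>c y)"
    using y conjugate_vec_sprod_comm[OF y(1) y(1)] by simp
  finally have e: "w \<bullet>c w = lam * (y \<bullet>c y)" .
  have "y \<bullet>c y > 0" using y by simp
  then have p: "Im (y \<bullet>c y) = 0" "Re (y \<bullet>c y) > 0" by (auto simp: less_complex_def)
  have "w \<bullet>c w \<ge> 0" by (rule conjugate_square_ge_0_vec)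
  then have q: "Im (w \<bullet>c w) = 0" "Re (w \<bullet>c w) \<ge> 0" by (auto simp: less_eq_complex_def)
  have "Im (w \<bullet>c w) = Im lam * Re (y \<bullet>c y)" "Re (w \<bullet>c w) = Re lam * Re (y \<bullet>c y)"
    unfolding e using p by simp_all
  then show "Im lam = 0" "Re lam \<ge> 0" using p q by (simp_all add: zero_le_mult_iff)
qed

lemma of_real_gram_eigenvalue:
  assumes B: "B \<in> carrier_mat k l" and ev: "eigenvalue (cmat (B * B\<^sup>T)) lam"
  obtains t where "lam = of_real t" "t \<ge> 0" "poly (char_poly (B * B\<^sup>T)) t = 0"
proof -
  have G: "B * B\<^sup>T \<in> carrier_mat k k" using B by auto
  from ev obtain y where y: "y \<in> carrier_vec k" "y \<noteq> 0\<^sub>v k" "cmat (B*B\<^sup>T) *\<^sub>v y = lam \<cdot>\<^sub>v y"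
    unfolding eigenvalue_def eigenvector_def using B by auto
  have "cmat B *\<^sub>v ((cmat B)\<^sup>T *\<^sub>v y) = lam \<cdot>\<^sub>v y"
    using y(3) B y(1) unfolding of_real_gram[OF B] by (subst assoc_mult_mat_vec[symmetric]) auto
  from of_real_gram_eigenvalue_real_nonneg[OF B y(1,2) this]
  have lam: "lam = of_real (Re lam)" "Re lam \<ge> 0" by (auto simp: complex_eq_iff)
  have "poly (char_poly (cmat (B*B\<^sup>T))) lam = 0"
    using ev eigenvalue_root_char_poly[of "cmat (B*B\<^sup>T)" k] G by auto
  then have "poly (map_poly complex_of_real (char_poly (B*B\<^sup>T))) (of_real (Re lam)) = 0"
    using of_real_hom.char_poly_hom[OF G] lam(1) by metis
  then have "poly (char_poly (B*B\<^sup>T)) (Re lam) = 0" by (simp add: of_real_hom.poly_map_poly)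
  with lam that show ?thesis by blast
qed

subsection \<open>Eigenvalues of the iteration matrix\<close>

lemma eigenvalue_iterMcE:
  fixes C :: "complex mat"
  assumes C: "C \<in> carrier_mat n2 n1" and ev: "eigenvalue (iterMc n1 n2 C g1 g2) z"
  obtains x y where "x \<in> carrier_vec n1" "y \<in> carrier_vec n2" "x \<noteq> 0\<^sub>v n1 \<or> y \<noteq> 0\<^sub>v n2"
    "(1-g1-z) \<cdot>\<^sub>v x = g1 \<cdot>\<^sub>v (C\<^sup>T *\<^sub>v y)"
    "(1-g2-z) \<cdot>\<^sub>v y + (g1*g2) \<cdot>\<^sub>v (C *\<^sub>v (C\<^sup>T *\<^sub>v y)) = (g2*(1-g1)) \<cdot>\<^sub>v (C *\<^sub>v x)"
proof -
  from ev obtain w where w: "w \<in> carrier_vec (n1+n2)" "w \<noteq> 0\<^sub>v (n1+n2)"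
      "iterMc n1 n2 C g1 g2 *\<^sub>v w = z \<cdot>\<^sub>v w"
    unfolding eigenvalue_def eigenvector_def using iterMc_carrier[OF C, of g1 g2] by auto
  define x where "x = vec_first w n1"
  define y where "y = vec_last w n2"
  have x: "x \<in> carrier_vec n1" and y: "y \<in> carrier_vec n2" unfolding x_def y_def by auto
  have w_split: "w = x @\<^sub>v y" using w(1) unfolding x_def y_def by simp
  show ?thesis
    using that[OF x y] w(2,3) iterMc_eigen_iff[OF C x y] x y
    unfolding w_split by (auto simp: append_vec_eq_zero_iff)
qed

lemma iterMc_eigen_gram_kernel:
  fixes C :: "real mat"
  assumes C: "C \<in> carrier_mat n2 n1" and x: "x \<in> carrier_vec n1" and y: "y \<in> carrier_vec n2"
    and y0: "y \<noteq> 0\<^sub>v n2" and z: "z \<noteq> 0" and g2: "g2 \<noteq> 0"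
    and first: "(1-g1-z) \<cdot>\<^sub>v x = g1 \<cdot>\<^sub>v ((cmat C)\<^sup>T *\<^sub>v y)"
    and second: "(1-g2-z) \<cdot>\<^sub>v y + (g1*g2) \<cdot>\<^sub>v (cmat C *\<^sub>v ((cmat C)\<^sup>T *\<^sub>v y)) = (g2*(1-g1)) \<cdot>\<^sub>v (cmat C *\<^sub>v x)"
    and ker: "cmat C *\<^sub>v ((cmat C)\<^sup>T *\<^sub>v y) = 0\<^sub>v n2"
  shows "z = 1 - g1 \<and> x \<noteq> 0\<^sub>v n1 \<and> cmat C *\<^sub>v x = 0\<^sub>v n2 \<or> z = 1 - g2 \<and> (cmat C)\<^sup>T *\<^sub>v y = 0\<^sub>v n1"
proof -
  let ?C = "cmat C"
  have Cc: "?C \<in> carrier_mat n2 n1" and CcT: "?C\<^sup>T \<in> carrier_mat n1 n2" using C by auto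
  have u: "?C\<^sup>T *\<^sub>v y = 0\<^sub>v n1" by (rule of_real_gram_kernel[OF C y ker])
  then have first': "(1-g1-z) \<cdot>\<^sub>v x = 0\<^sub>v n1" using first by simp
  have second': "(1-g2-z) \<cdot>\<^sub>v y = (g2*(1-g1)) \<cdot>\<^sub>v (?C *\<^sub>v x)" using second ker Cc y by simp
  show ?thesis
  proof (cases "x = 0\<^sub>v n1")
    case True
    then have "(1-g2-z) \<cdot>\<^sub>v y = 0\<^sub>v n2" using second' Cc by simp
    then show ?thesis using y0 y u by (simp add: smult_vec_eq_zero_iff)
  next
    case False
    then have z1: "z = 1 - g1" using first' x by (simp add: smult_vec_eq_zero_iff)
    have "(g2*(1-g1)) \<cdot>\<^sub>v (?C\<^sup>T *\<^sub>v (?C *\<^sub>v x)) = ?C\<^sup>T *\<^sub>v ((1-g2-z) \<cdot>\<^sub>v y)"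
      unfolding second' using Cc CcT x by (simp add: mult_mat_vec)
    also have "\<dots> = 0\<^sub>v n1" using u CcT y by (simp add: mult_mat_vec)
    finally have "?C\<^sup>T *\<^sub>v (?C *\<^sub>v x) = 0\<^sub>v n1"
      using g2 z z1 Cc CcT x by (simp add: smult_vec_eq_zero_iff)
    then have "?C *\<^sub>v x = 0\<^sub>v n2"
      using of_real_gram_kernel[of "C\<^sup>T" n1 n2 x] C x by (simp add: map_mat_transpose)
    then show ?thesis using z1 False by blast
  qed
qed

lemma iterMc_eigen_gram_nonzero:
  fixes C :: "real mat"
  assumes C: "C \<in> carrier_mat n2 n1" and x: "x \<in> carrier_vec n1" and y: "y \<in> carrier_vec n2"
    and z: "z \<noteq> 0" and g1: "g1 \<noteq> 0" and g2: "g2 \<noteq> 0"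
    and first: "(1-g1-z) \<cdot>\<^sub>v x = g1 \<cdot>\<^sub>v ((cmat C)\<^sup>T *\<^sub>v y)"
    and second: "(1-g2-z) \<cdot>\<^sub>v y + (g1*g2) \<cdot>\<^sub>v (cmat C *\<^sub>v ((cmat C)\<^sup>T *\<^sub>v y)) = (g2*(1-g1)) \<cdot>\<^sub>v (cmat C *\<^sub>v x)"
    and nz: "cmat C *\<^sub>v ((cmat C)\<^sup>T *\<^sub>v y) \<noteq> 0\<^sub>v n2"
  shows "\<exists>lam. lam \<noteq> 0 \<and> eigenvalue (cmat (C * C\<^sup>T)) lam \<and> (z-1+g1)*(z-1+g2) = g1*g2*lam*z"
proof -
  let ?C = "cmat C"
  have Cc: "?C \<in> carrier_mat n2 n1" using C by auto
  note gram = iterMc_eigen_gram[OF Cc x y first second]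
  have zg: "g1*g2*z \<noteq> 0" using z g1 g2 by simp
  define lam where "lam = (z-1+g1)*(z-1+g2) / (g1*g2*z)"
  have "?C *\<^sub>v (?C\<^sup>T *\<^sub>v y) = inverse (g1*g2*z) \<cdot>\<^sub>v ((g1*g2*z) \<cdot>\<^sub>v (?C *\<^sub>v (?C\<^sup>T *\<^sub>v y)))"
    unfolding smult_smult_assoc left_inverse[OF zg] by simp
  also have "\<dots> = lam \<cdot>\<^sub>v y"
    unfolding gram lam_def smult_smult_assoc by (simp add: field_simps)
  finally have eig: "?C *\<^sub>v (?C\<^sup>T *\<^sub>v y) = lam \<cdot>\<^sub>v y" .
  then have "lam \<noteq> 0" "y \<noteq> 0\<^sub>v n2" using nz y by (auto simp: smult_vec_eq_zero_iff)
  moreover have "eigenvalue (cmat (C * C\<^sup>T)) lam"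
    unfolding eigenvalue_def eigenvector_def of_real_gram[OF C]
    using eig \<open>y \<noteq> 0\<^sub>v n2\<close> y Cc by (intro exI[of _ y]) (auto simp: assoc_mult_mat_vec)
  moreover have "(z-1+g1)*(z-1+g2) = g1*g2*lam*z" using zg unfolding lam_def by simp
  ultimately show ?thesis by blast
qed

lemma iterMc_eigen_second_block_zero:
  fixes C :: "complex mat"
  assumes C: "C \<in> carrier_mat n2 n1" and x: "x \<in> carrier_vec n1" and x0: "x \<noteq> 0\<^sub>v n1"
    and z: "z \<noteq> 0" and g2: "g2 \<noteq> 0"
    and first: "(1-g1-z) \<cdot>\<^sub>v x = g1 \<cdot>\<^sub>v (C\<^sup>T *\<^sub>v 0\<^sub>v n2)"
    and second: "(1-g2-z) \<cdot>\<^sub>v 0\<^sub>v n2 + (g1*g2) \<cdot>\<^sub>v (C *\<^sub>v (C\<^sup>T *\<^sub>v 0\<^sub>v n2)) = (g2*(1-g1)) \<cdot>\<^sub>v (C *\<^sub>v x)"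
  shows "z = 1 - g1 \<and> C *\<^sub>v x = 0\<^sub>v n2"
proof -
  have CT: "C\<^sup>T \<in> carrier_mat n1 n2" using C by auto
  have "(1-g1-z) \<cdot>\<^sub>v x = 0\<^sub>v n1" using first CT by simp
  then have z1: "z = 1 - g1" using x x0 by (simp add: smult_vec_eq_zero_iff)
  have "(g2*(1-g1)) \<cdot>\<^sub>v (C *\<^sub>v x) = 0\<^sub>v n2" using second[symmetric] C CT by simp
  then show ?thesis using g2 z z1 C x by (simp add: smult_vec_eq_zero_iff)
qed

lemma eigenvalue_iterMc_cases:
  fixes C :: "real mat" and g1 g2 z :: complex
  assumes C: "C \<in> carrier_mat n2 n1" and g1: "g1 \<noteq> 0" and g2: "g2 \<noteq> 0"
    and ev: "eigenvalue (iterMc n1 n2 (cmat C) g1 g2) z"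
  shows "z = 0 \<or>
    z = 1 - g1 \<and> (\<exists>v\<in>carrier_vec n1. v \<noteq> 0\<^sub>v n1 \<and> C *\<^sub>v v = 0\<^sub>v n2) \<or>
    z = 1 - g2 \<and> (\<exists>v\<in>carrier_vec n2. v \<noteq> 0\<^sub>v n2 \<and> C\<^sup>T *\<^sub>v v = 0\<^sub>v n1) \<or>
    (\<exists>lam. lam \<noteq> 0 \<and> eigenvalue (cmat (C * C\<^sup>T)) lam \<and> (z-1+g1)*(z-1+g2) = g1*g2*lam*z)"
proof -
  let ?C = "cmat C"
  have Cc: "?C \<in> carrier_mat n2 n1" using C by auto
  obtain x y where x: "x \<in> carrier_vec n1" and y: "y \<in> carrier_vec n2"
    and nz: "x \<noteq> 0\<^sub>v n1 \<or> y \<noteq> 0\<^sub>v n2"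
    and first: "(1-g1-z) \<cdot>\<^sub>v x = g1 \<cdot>\<^sub>v (?C\<^sup>T *\<^sub>v y)"
    and second: "(1-g2-z) \<cdot>\<^sub>v y + (g1*g2) \<cdot>\<^sub>v (?C *\<^sub>v (?C\<^sup>T *\<^sub>v y)) = (g2*(1-g1)) \<cdot>\<^sub>v (?C *\<^sub>v x)"
    by (rule eigenvalue_iterMcE[OF Cc ev])
  have kerC: "\<exists>v\<in>carrier_vec n1. v \<noteq> 0\<^sub>v n1 \<and> C *\<^sub>v v = 0\<^sub>v n2"
    if "x \<noteq> 0\<^sub>v n1" "?C *\<^sub>v x = 0\<^sub>v n2"
    using of_real_mat_kernel_nontrivialE[OF C x that] by blast
  have kerCT: "\<exists>v\<in>carrier_vec n2. v \<noteq> 0\<^sub>v n2 \<and> C\<^sup>T *\<^sub>v v = 0\<^sub>v n1"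
    if "y \<noteq> 0\<^sub>v n2" "?C\<^sup>T *\<^sub>v y = 0\<^sub>v n1"
    using of_real_mat_kernel_nontrivialE[of "C\<^sup>T" n1 n2 y] that C y by (auto simp: map_mat_transpose)
  consider "z = 0" | "z \<noteq> 0" "y = 0\<^sub>v n2"
    | "z \<noteq> 0" "?C *\<^sub>v (?C\<^sup>T *\<^sub>v y) \<noteq> 0\<^sub>v n2"
    | "z \<noteq> 0" "y \<noteq> 0\<^sub>v n2" "?C *\<^sub>v (?C\<^sup>T *\<^sub>v y) = 0\<^sub>v n2" by blast
  then show ?thesis
  proof cases
    case 2
    then show ?thesis using iterMc_eigen_second_block_zero[OF Cc x _ 2(1) g2] first second nz kerC by auto
  next
    case 3
    then show ?thesis using iterMc_eigen_gram_nonzero[OF C x y 3(1) g1 g2 first second 3(2)] by blast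
  next
    case 4
    then show ?thesis
      using iterMc_eigen_gram_kernel[OF C x y 4(2,1) g2 first second 4(3)] kerC kerCT by blast
  qed simp
qed

subsection \<open>The spectrum of \<open>CC\<^sup>T\<close>\<close>

lemma gram_char_poly_splits:
  fixes B :: "real mat"
  assumes B: "B \<in> carrier_mat k l"
  shows "\<exists>rs. char_poly (B * B\<^sup>T) = (\<Prod>r\<leftarrow>rs. [:-r, 1:]) \<and> length rs = k \<and> (\<forall>r\<in>set rs. r \<ge> 0)"
proof -
  have G: "B * B\<^sup>T \<in> carrier_mat k k" using B by auto
  have Gc: "cmat (B * B\<^sup>T) \<in> carrier_mat k k" using G by auto
  from char_poly_factorized[OF Gc] obtain as where
    as: "char_poly (cmat (B * B\<^sup>T)) = (\<Prod>a\<leftarrow>as. [:- a, 1:])" "length as = k" by auto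
  have re: "a = complex_of_real (Re a) \<and> Re a \<ge> 0" if a: "a \<in> set as" for a
  proof -
    have "poly (char_poly (cmat (B * B\<^sup>T))) a = 0" unfolding as(1) using a
      by (simp add: poly_prod_list prod_list_zero_iff)
    then have "eigenvalue (cmat (B * B\<^sup>T)) a" using eigenvalue_root_char_poly[OF Gc] by simp
    then show ?thesis by (rule of_real_gram_eigenvalue[OF B]) simp
  qed
  interpret rp: map_poly_inj_idom_hom "complex_of_real" ..
  define rs where "rs = map Re as"
  have "map_poly complex_of_real (\<Prod>r\<leftarrow>rs. [:-r, 1:]) = (\<Prod>r\<leftarrow>rs. [:-complex_of_real r, 1:])"
    by (simp add: rp.hom_prod_list o_def)
  also have "\<dots> = (\<Prod>a\<leftarrow>as. [:- a, 1:])" unfolding rs_def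
    by (simp add: o_def) (metis (mono_tags, lifting) map_eq_conv re)
  also have "\<dots> = map_poly complex_of_real (char_poly (B * B\<^sup>T))"
    using as(1) of_real_hom.char_poly_hom[OF G] by metis
  finally have "map_poly complex_of_real (\<Prod>r\<leftarrow>rs. [:-r, 1:]) = map_poly complex_of_real (char_poly (B * B\<^sup>T))" .
  then have eq: "(\<Prod>r\<leftarrow>rs. [:-r, 1:]) = char_poly (B * B\<^sup>T)"
    by (metis rp.injectivity)
  have "length rs = k" "\<forall>r\<in>set rs. r \<ge> 0" using as(2) re unfolding rs_def by auto
  then show ?thesis using eq by metis
qed

lemma det_smult_one: "det (x \<cdot>\<^sub>m 1\<^sub>m n) = (x::'a::comm_ring_1)^n"
  by (simp add: det_smult)

lemma det_sylvester:
  fixes C B :: "'a :: field mat"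
  assumes C: "C \<in> carrier_mat n2 n1" and B: "B \<in> carrier_mat n1 n2" and x: "x \<noteq> 0"
  shows "x^n1 * det (x \<cdot>\<^sub>m 1\<^sub>m n2 - C * B) = x^n2 * det (x \<cdot>\<^sub>m 1\<^sub>m n1 - B * C)"
proof -
  define K0 where "K0 = four_block_mat (x \<cdot>\<^sub>m 1\<^sub>m n2) C B (1\<^sub>m n1)"
  define L1 where "L1 = four_block_mat (1\<^sub>m n2) (-C) (0\<^sub>m n1 n2) (x \<cdot>\<^sub>m 1\<^sub>m n1)"
  define L2 where "L2 = four_block_mat (x \<cdot>\<^sub>m 1\<^sub>m n2) (0\<^sub>m n2 n1) (-B) (x \<cdot>\<^sub>m 1\<^sub>m n1)"
  have K0: "K0 \<in> carrier_mat (n2+n1) (n2+n1)" unfolding K0_def using C B by auto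
  have L1: "L1 \<in> carrier_mat (n2+n1) (n2+n1)" unfolding L1_def using C B by auto
  have L2: "L2 \<in> carrier_mat (n2+n1) (n2+n1)" unfolding L2_def using C B by auto
  have CB: "C * B \<in> carrier_mat n2 n2" and BC: "B * C \<in> carrier_mat n1 n1" using C B by auto
  have e1: "L1 * K0 = four_block_mat (x \<cdot>\<^sub>m 1\<^sub>m n2 - C * B) (0\<^sub>m n2 n1) (x \<cdot>\<^sub>m B) (x \<cdot>\<^sub>m 1\<^sub>m n1)"
    unfolding L1_def K0_def
    apply (subst mult_four_block_mat[OF one_carrier_mat _ zero_carrier_mat smult_carrier_mat[OF one_carrier_mat]
       smult_carrier_mat[OF one_carrier_mat] C B one_carrier_mat])
    using C apply simp
    apply (rule cong_four_block_mat)
    using C B CB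
    by (auto simp: mult_smult_distrib mult_smult_assoc_mat uminus_mult_left_mat minus_add_uminus_mat)
  have d1: "det L1 * det K0 = x^n1 * det (x \<cdot>\<^sub>m 1\<^sub>m n2 - C * B)"
    unfolding det_mult[OF L1 K0, symmetric] e1
    by (subst det_four_block_mat_upper_right_zero[of _ n2 _ n1]) (use C B CB in \<open>auto simp: det_smult_one\<close>)
  have dL1: "det L1 = x^n1" unfolding L1_def
    by (subst det_four_block_mat_lower_left_zero[of _ n2 _ n1]) (use C in \<open>auto simp: det_smult_one\<close>)
  have e2: "L2 * K0 = four_block_mat ((x*x) \<cdot>\<^sub>m 1\<^sub>m n2) (x \<cdot>\<^sub>m C) (0\<^sub>m n1 n2) (x \<cdot>\<^sub>m 1\<^sub>m n1 - B * C)"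
    unfolding L2_def K0_def
    apply (subst mult_four_block_mat[OF smult_carrier_mat[OF one_carrier_mat] zero_carrier_mat _ smult_carrier_mat[OF one_carrier_mat]
       smult_carrier_mat[OF one_carrier_mat] C B one_carrier_mat])
    using B apply simp
    apply (rule cong_four_block_mat)
    using C B BC
    by (auto simp: mult_smult_distrib mult_smult_assoc_mat uminus_mult_left_mat minus_add_uminus_mat)
  have d2: "det L2 * det K0 = (x*x)^n2 * det (x \<cdot>\<^sub>m 1\<^sub>m n1 - B * C)"
    unfolding det_mult[OF L2 K0, symmetric] e2
    by (subst det_four_block_mat_lower_left_zero[of _ n2 _ n1]) (use C B BC in \<open>auto simp: det_smult_one\<close>)
  have dL2: "det L2 = x^n2 * x^n1" unfolding L2_def
    by (subst det_four_block_mat_upper_right_zero[of _ n2 _ n1]) (use B in \<open>auto simp: det_smult_one\<close>)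
  from d1 dL1 x have dK0: "det K0 = det (x \<cdot>\<^sub>m 1\<^sub>m n2 - C * B)" by simp
  from d2 dL2 dK0 have "x^n2 * (x^n1 * det (x \<cdot>\<^sub>m 1\<^sub>m n2 - C * B)) = x^n2 * (x^n2 * det (x \<cdot>\<^sub>m 1\<^sub>m n1 - B * C))"
    by (simp add: power_mult_distrib ac_simps)
  then show ?thesis using x by simp
qed

lemma char_poly_mult_commute:
  fixes C B :: "real mat"
  assumes C: "C \<in> carrier_mat n2 n1" and B: "B \<in> carrier_mat n1 n2"
  shows "monom 1 n1 * char_poly (C * B) = monom 1 n2 * char_poly (B * C)"
proof -
  let ?p = "monom 1 n1 * char_poly (C * B) - monom 1 n2 * char_poly (B * C)"
  have CB: "C * B \<in> carrier_mat n2 n2" and BC: "B * C \<in> carrier_mat n1 n1" using C B by auto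
  have cp: "poly (char_poly A) x = det (x \<cdot>\<^sub>m 1\<^sub>m n - A)" if A: "A \<in> carrier_mat n n" for A :: "real mat" and x n
  proof -
    have "- char_matrix A x = x \<cdot>\<^sub>m 1\<^sub>m n - A" unfolding char_matrix_def using A by (intro eq_matI) auto
    then show ?thesis using char_poly_matrix[OF A] by simp
  qed
  have roots: "poly ?p x = 0" if "x \<noteq> 0" for x
    using det_sylvester[OF C B that] cp[OF CB] cp[OF BC] by (simp add: poly_monom)
  show ?thesis
  proof (rule ccontr)
    assume "\<not> ?thesis"
    then have "?p \<noteq> 0" by simp
    from poly_roots_finite[OF this] have fin: "finite {x. poly ?p x = 0}" .
    have "UNIV - {0} \<subseteq> {x. poly ?p x = 0}" using roots by auto
    then have "finite (UNIV - {0::real})" using fin finite_subset by blast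
    then show False using infinite_UNIV_char_0 by auto
  qed
qed

lemma scalar_prod_self_eq_zero: "(w :: real vec) \<in> carrier_vec n \<Longrightarrow> w \<bullet> w = 0 \<Longrightarrow> w = 0\<^sub>v n"
proof -
  assume w: "w \<in> carrier_vec n" and "w \<bullet> w = 0"
  then have "w \<bullet>c w = 0" by simp
  then show ?thesis using conjugate_square_eq_0_vec[OF w] by simp
qed

context vec_space
begin

lemma full_col_rank_mult_vec_eq_zero:
  assumes A: "A \<in> carrier_mat n nc" and r: "rank A = nc" and v: "v \<in> carrier_vec nc"
    and Av: "A *\<^sub>v v = 0\<^sub>v n"
  shows "v = 0\<^sub>v nc"
proof -
  have dist: "distinct (cols A)"
  proof (rule ccontr)
    assume nd: "\<not> distinct (cols A)"
    obtain S where S: "maximal S (\<lambda>T. T \<subseteq> set (cols A) \<and> lin_indpt T)"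
      using maximal_exists[of "(\<lambda>T. T \<subseteq> set (cols A) \<and> lin_indpt T)" "card (set (cols A))" "{}"]
      by (meson List.finite_set card_mono empty_iff empty_subsetI finite_lin_indpt2 rev_finite_subset)
    then have "card S \<le> card (set (cols A))" by (simp add: card_mono maximal_def)
    also have "card (set (cols A)) < length (cols A)"
      using nd by (metis card_distinct card_length le_neq_implies_less)
    also have "length (cols A) = nc" using A by simp
    finally have "card S < nc" .
    with rank_card_indpt[OF A S] r show False by simp
  qed
  have li: "lin_indpt (set (cols A))" using full_rank_lin_indpt[OF A r dist] .
  show ?thesis
  proof (rule ccontr)
    assume "v \<noteq> 0\<^sub>v nc"
    from lin_depI[OF A v this Av dist] li show False by simp
  qed
qed

lemma full_row_rank_in_col_space:
  fixes A :: "'a mat"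
  assumes A: "A \<in> carrier_mat n nc" and r: "rank A = n" and y: "y \<in> carrier_vec n"
  shows "\<exists>x\<in>carrier_vec nc. y = A *\<^sub>v x"
proof -
  obtain S where S: "maximal S (\<lambda>T. T \<subseteq> set (cols A) \<and> lin_indpt T)"
    using maximal_exists[of "(\<lambda>T. T \<subseteq> set (cols A) \<and> lin_indpt T)" "card (set (cols A))" "{}"]
    by (meson List.finite_set card_mono empty_iff empty_subsetI finite_lin_indpt2 rev_finite_subset)
  have cS: "card S = n" using rank_card_indpt[OF A S] r by simp
  have Ssub: "S \<subseteq> set (cols A)" and liS: "lin_indpt S" using S unfolding maximal_def by auto
  have Scar: "S \<subseteq> carrier_vec n" using Ssub A cols_dim by blast
  have finS: "finite S" using Ssub finite_subset by blast
  have "basis S" by (rule dim_li_is_basis) (use finS Scar liS cS dim_is_n in auto)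
  then have spS: "span S = carrier_vec n" unfolding basis_def by auto
  have "span S \<subseteq> span (set (cols A))" by (rule span_is_monotone[OF Ssub])
  then have "y \<in> col_space A" unfolding col_space_def using spS y by auto
  then show ?thesis unfolding col_space_eq[OF A] using A by auto
qed

end

lemma full_row_rank_transpose_mult_vec_eq_zero:
  fixes A :: "real mat"
  assumes A: "A \<in> carrier_mat n nc" and r: "vec_space.rank n A = n" and y: "y \<in> carrier_vec n"
    and Ay: "A\<^sup>T *\<^sub>v y = 0\<^sub>v nc"
  shows "y = 0\<^sub>v n"
proof -
  obtain x where x: "x \<in> carrier_vec nc" "y = A *\<^sub>v x"
    using vec_space.full_row_rank_in_col_space[OF A r y] by auto
  have "y \<bullet> y = y \<bullet> (A *\<^sub>v x)" using x by simp
  also have "\<dots> = (A\<^sup>T *\<^sub>v y) \<bullet> x" using transpose_vec_mult_scalar[OF A x(1) y] by simp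
  also have "\<dots> = 0" using Ay x by simp
  finally show ?thesis using scalar_prod_self_eq_zero[OF y] by simp
qed

lemma rev_sorted_list_of_multiset_zeros_plus_positives:
  fixes P :: "real list"
  assumes pos: "\<forall>p\<in>set P. p > 0" and len: "length P = r" and r: "r \<ge> 1"
    and R: "R = replicate_mset z 0 + mset P"
  defines "L \<equiv> rev (sorted_list_of_multiset R)"
  shows "L ! 0 \<in> set P" "L ! (r-1) \<in> set P" "\<forall>p\<in>set P. L!(r-1) \<le> p \<and> p \<le> L!0"
    "\<forall>t\<in>#R. t = 0 \<or> t \<in> set P"
proof -
  define Q where "Q = sort P"
  have sQ: "sorted Q" and mQ: "mset Q = mset P" and lQ: "length Q = r" and setQ: "set Q = set P"
    unfolding Q_def using len by auto
  have "sorted (replicate z 0 @ Q)"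
    using sQ pos setQ by (auto simp: sorted_append less_imp_le)
  moreover have "mset (replicate z 0 @ Q) = R" unfolding R using mQ by simp
  ultimately have "sorted_list_of_multiset R = replicate z 0 @ Q"
    by (metis sorted_list_of_multiset_mset sorted_sort_id)
  then have L: "L = rev Q @ replicate z 0" unfolding L_def by simp
  have i: "L ! i = Q ! (r - 1 - i)" if "i < r" for i
    unfolding L using that lQ by (simp add: nth_append rev_nth)
  have L0: "L ! 0 = Q ! (r-1)" using i[of 0] r by simp
  have Lr: "L ! (r-1) = Q ! 0" using i[of "r-1"] r by simp
  show "L ! 0 \<in> set P" unfolding L0 setQ[symmetric] using lQ r by simp
  show "L ! (r-1) \<in> set P" unfolding Lr setQ[symmetric] using lQ r by simp
  show "\<forall>p\<in>set P. L!(r-1) \<le> p \<and> p \<le> L!0"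
  proof
    fix p assume "p \<in> set P"
    then obtain k where k: "k < r" "p = Q ! k" unfolding setQ[symmetric] using lQ by (metis in_set_conv_nth)
    show "L!(r-1) \<le> p \<and> p \<le> L!0" unfolding L0 Lr k(2)
      using sorted_nth_mono[OF sQ, of 0 k] sorted_nth_mono[OF sQ, of k "r-1"] k(1) lQ by auto
  qed
  show "\<forall>t\<in>#R. t = 0 \<or> t \<in> set P" unfolding R by auto
qed

lemma proots_linprod: "proots (\<Prod>r\<leftarrow>rs. [:-r, 1:]) = mset (rs :: real list)"
proof (induction rs)
  case (Cons a rs)
  have nz: "(\<Prod>r\<leftarrow>rs. [:-r, 1:]) \<noteq> 0" by (auto simp: prod_list_zero_iff)
  have nz2: "[:-a, 1:] \<noteq> 0" by simp
  have "proots (\<Prod>r\<leftarrow>a#rs. [:-r, 1:]) = proots [:-a, 1:] + proots (\<Prod>r\<leftarrow>rs. [:-r, 1:])"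
    using proots_mult[OF nz2 nz] by simp
  also have "proots [:-a, 1:] = {#a#}" using proots_linear_factor[of "-a"] by simp
  finally show ?case using Cons by simp
qed simp

lemma proots_monom: "proots (monom (1::real) n) = replicate_mset n 0"
proof -
  have "monom (1::real) n = [:-0, 1:]^n" by (simp add: monom_altdef)
  then show ?thesis by (simp only: proots_power proots_linear_factor) simp
qed

lemma char_poly_nonzero: "A \<in> carrier_mat n n \<Longrightarrow> char_poly A \<noteq> 0"
  using degree_monic_char_poly[of A n] by auto

lemma gram_char_poly_root_nonzero:
  fixes B :: "real mat"
  assumes B: "B \<in> carrier_mat k l" and inj: "\<forall>u\<in>carrier_vec k. B\<^sup>T *\<^sub>v u = 0\<^sub>v l \<longrightarrow> u = 0\<^sub>v k"
    and root: "poly (char_poly (B * B\<^sup>T)) t = 0"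
  shows "t \<noteq> 0"
proof
  assume t0: "t = 0"
  have G: "B * B\<^sup>T \<in> carrier_mat k k" using B by auto
  have "eigenvalue (B * B\<^sup>T) 0" using root t0 eigenvalue_root_char_poly[OF G] by simp
  then obtain u where u: "u \<in> carrier_vec k" "u \<noteq> 0\<^sub>v k" "(B * B\<^sup>T) *\<^sub>v u = 0 \<cdot>\<^sub>v u"
    unfolding eigenvalue_def eigenvector_def using G by auto
  have BT: "B\<^sup>T \<in> carrier_mat l k" using B by auto
  have w: "B\<^sup>T *\<^sub>v u \<in> carrier_vec l" using BT u by auto
  have "B *\<^sub>v (B\<^sup>T *\<^sub>v u) = 0\<^sub>v k" using u(3) B u(1) by (subst assoc_mult_mat_vec[symmetric]) auto
  then have "u \<bullet> (B *\<^sub>v (B\<^sup>T *\<^sub>v u)) = 0" using u by simp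
  then have "(B\<^sup>T *\<^sub>v u) \<bullet> (B\<^sup>T *\<^sub>v u) = 0" using transpose_vec_mult_scalar[OF B w u(1)] by simp
  then have "B\<^sup>T *\<^sub>v u = 0\<^sub>v l" using scalar_prod_self_eq_zero[OF w] by simp
  with inj u show False by auto
qed

lemma gram_char_poly_positive_roots:
  fixes B :: "real mat"
  assumes B: "B \<in> carrier_mat k l" and inj: "\<forall>u\<in>carrier_vec k. B\<^sup>T *\<^sub>v u = 0\<^sub>v l \<longrightarrow> u = 0\<^sub>v k"
  obtains rs where "char_poly (B * B\<^sup>T) = (\<Prod>r\<leftarrow>rs. [:-r, 1:])" "length rs = k" "\<forall>r\<in>set rs. r > 0"
proof -
  from gram_char_poly_splits[OF B] obtain rs where
    rs: "char_poly (B * B\<^sup>T) = (\<Prod>r\<leftarrow>rs. [:-r, 1:])" "length rs = k" "\<forall>r\<in>set rs. r \<ge> 0" by auto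
  have "p > 0" if p: "p \<in> set rs" for p
  proof -
    have "poly (char_poly (B * B\<^sup>T)) p = 0" unfolding rs(1) using p
      by (simp add: poly_prod_list prod_list_zero_iff)
    from gram_char_poly_root_nonzero[OF B inj this] rs(3) p show "p > 0" by force
  qed
  with rs that show ?thesis by blast
qed

lemma min_rank_kernels_trivial:
  fixes C :: "real mat"
  assumes C: "C \<in> carrier_mat n2 n1" and rk: "vec_space.rank n2 C = min n1 n2"
  shows "n1 \<le> n2 \<Longrightarrow> \<forall>v\<in>carrier_vec n1. C *\<^sub>v v = 0\<^sub>v n2 \<longrightarrow> v = 0\<^sub>v n1"
    and "n2 \<le> n1 \<Longrightarrow> \<forall>v\<in>carrier_vec n2. C\<^sup>T *\<^sub>v v = 0\<^sub>v n1 \<longrightarrow> v = 0\<^sub>v n2"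
  using vec_space.full_col_rank_mult_vec_eq_zero[OF C] full_row_rank_transpose_mult_vec_eq_zero[OF C] rk
  by (auto simp: min_def)

text \<open>For \<open>n\<^sub>1 \<le> n\<^sub>2\<close> the positive eigenvalues of \<open>CC\<^sup>T\<close> are those of the invertible \<open>C\<^sup>TC\<close>.\<close>
lemma gram_char_poly_roots:
  fixes C :: "real mat"
  assumes C: "C \<in> carrier_mat n2 n1" and rk: "vec_space.rank n2 C = min n1 n2"
  obtains P where "proots (char_poly (C * C\<^sup>T)) = replicate_mset (n2 - min n1 n2) 0 + mset P"
    "length P = min n1 n2" "\<forall>p\<in>set P. p > 0"
proof (cases "n1 \<le> n2")
  case True
  have CT: "C\<^sup>T \<in> carrier_mat n1 n2" using C by auto
  obtain rs where rs: "char_poly (C\<^sup>T * C) = (\<Prod>r\<leftarrow>rs. [:-r, 1:])" "length rs = n1" "\<forall>r\<in>set rs. r > 0"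
    using gram_char_poly_positive_roots[OF CT] min_rank_kernels_trivial(1)[OF C rk True] by auto
  have syl: "monom 1 n1 * char_poly (C * C\<^sup>T) = monom 1 n2 * char_poly (C\<^sup>T * C)"
    by (rule char_poly_mult_commute[OF C CT])
  have nz1: "char_poly (C * C\<^sup>T) \<noteq> 0" and nz2: "char_poly (C\<^sup>T * C) \<noteq> 0"
    using C by (auto intro!: char_poly_nonzero)
  have m0: "monom (1::real) k \<noteq> 0" for k by simp
  have "replicate_mset n1 0 + proots (char_poly (C * C\<^sup>T)) = replicate_mset n2 0 + mset rs"
    using arg_cong[OF syl, of proots] rs(1)
    unfolding proots_mult[OF m0 nz1] proots_mult[OF m0 nz2] proots_monom by (simp add: proots_linprod)
  also have "replicate_mset n2 (0::real) = replicate_mset n1 0 + replicate_mset (n2 - n1) 0"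
    using True by (intro multiset_eqI) auto
  finally have "proots (char_poly (C * C\<^sup>T)) = replicate_mset (n2 - n1) 0 + mset rs"
    by (simp add: add.assoc)
  then show ?thesis using True rs that by auto
next
  case False
  obtain rs where rs: "char_poly (C * C\<^sup>T) = (\<Prod>r\<leftarrow>rs. [:-r, 1:])" "length rs = n2" "\<forall>r\<in>set rs. r > 0"
    using gram_char_poly_positive_roots[OF C] min_rank_kernels_trivial(2)[OF C rk] False by auto
  then show ?thesis using False that by (auto simp: proots_linprod)
qed

lemma gram_eigenvalue_extremes:
  fixes C :: "real mat"
  assumes C: "C \<in> carrier_mat n2 n1" and rk: "vec_space.rank n2 C = min n1 n2"
    and r: "min n1 n2 \<noteq> 0"
  defines "l1 \<equiv> lambda_i (C * C\<^sup>T) 1" and "lr \<equiv> lambda_i (C * C\<^sup>T) (min n1 n2)"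
  shows "0 < lr" "lr \<le> l1" "eigenvalue (C * C\<^sup>T) l1" "eigenvalue (C * C\<^sup>T) lr"
    "\<And>t. poly (char_poly (C * C\<^sup>T)) t = 0 \<Longrightarrow> t \<noteq> 0 \<Longrightarrow> lr \<le> t \<and> t \<le> l1"
proof -
  have S: "C * C\<^sup>T \<in> carrier_mat n2 n2" using C by auto
  obtain P where P: "proots (char_poly (C * C\<^sup>T)) = replicate_mset (n2 - min n1 n2) 0 + mset P"
      "length P = min n1 n2" "\<forall>p\<in>set P. p > 0"
    by (rule gram_char_poly_roots[OF C rk])
  have l1: "l1 = rev (sorted_list_of_multiset (proots (char_poly (C * C\<^sup>T)))) ! 0"
    and lr: "lr = rev (sorted_list_of_multiset (proots (char_poly (C * C\<^sup>T)))) ! (min n1 n2 - 1)"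
    unfolding l1_def lr_def lambda_i_def eigs_desc_def by simp_all
  note L = rev_sorted_list_of_multiset_zeros_plus_positives[OF P(3,2) _ P(1), folded l1 lr]
  have root: "poly (char_poly (C * C\<^sup>T)) t = 0 \<longleftrightarrow> t \<in># proots (char_poly (C * C\<^sup>T))" for t
    using char_poly_nonzero[OF S] by simp
  have eig: "eigenvalue (C * C\<^sup>T) t" if "t \<in> set P" for t
    unfolding eigenvalue_root_char_poly[OF S] root P(1) using that by simp
  show "0 < lr" "lr \<le> l1" "eigenvalue (C * C\<^sup>T) l1" "eigenvalue (C * C\<^sup>T) lr"
    using L(1-3) r P(3) eig by auto
  show "lr \<le> t \<and> t \<le> l1" if "poly (char_poly (C * C\<^sup>T)) t = 0" "t \<noteq> 0" for t
    using L(3,4) r that unfolding root by auto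
qed

subsection \<open>The largest eigenvalue of \<open>CC\<^sup>T\<close>\<close>

lemma hcat_carrier: "A1 \<in> carrier_mat m n1 \<Longrightarrow> A2 \<in> carrier_mat m n2 \<Longrightarrow> hcat A1 A2 \<in> carrier_mat m (n1+n2)"
  unfolding hcat_def by auto

lemma hcat_mult:
  assumes A1: "A1 \<in> carrier_mat m n1" and A2: "A2 \<in> carrier_mat m n2"
    and x: "x \<in> carrier_vec n1" and y: "y \<in> carrier_vec n2"
  shows "hcat A1 A2 *\<^sub>v (x @\<^sub>v y) = A1 *\<^sub>v x + A2 *\<^sub>v y"
proof (rule eq_vecI)
  fix i assume "i < dim_vec (A1 *\<^sub>v x + A2 *\<^sub>v y)"
  then have i: "i < m" using A1 A2 by simp
  have r: "row (hcat A1 A2) i = row A1 i @\<^sub>v row A2 i"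
    by (rule eq_vecI) (use i A1 A2 in \<open>auto simp: hcat_def\<close>)
  have "(hcat A1 A2 *\<^sub>v (x @\<^sub>v y)) $ i = row (hcat A1 A2) i \<bullet> (x @\<^sub>v y)"
    using i A1 unfolding hcat_def by simp
  also have "\<dots> = row A1 i \<bullet> x + row A2 i \<bullet> y" unfolding r
    by (rule scalar_prod_append) (use A1 A2 x y i in auto)
  finally show "(hcat A1 A2 *\<^sub>v (x @\<^sub>v y)) $ i = (A1 *\<^sub>v x + A2 *\<^sub>v y) $ i" using i A1 A2 by simp
qed (use A1 A2 in \<open>auto simp: hcat_def\<close>)

lemma orthonormal_cols_scalar_prod:
  fixes A :: "real mat"
  assumes A: "A \<in> carrier_mat m n" and orth: "A\<^sup>T * A = 1\<^sub>m n" and p: "p \<in> carrier_vec n"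
  shows "(A *\<^sub>v p) \<bullet> (A *\<^sub>v p) = p \<bullet> p"
proof -
  have "(A *\<^sub>v p) \<bullet> (A *\<^sub>v p) = (A\<^sup>T *\<^sub>v (A *\<^sub>v p)) \<bullet> p"
    using transpose_vec_mult_scalar[OF A p, of "A *\<^sub>v p"] A p by simp
  also have "A\<^sup>T *\<^sub>v (A *\<^sub>v p) = p" using A p orth by (subst assoc_mult_mat_vec[symmetric]) auto
  finally show ?thesis .
qed

lemma orthonormal_cols_projection_residual:
  fixes A :: "real mat"
  assumes A: "A \<in> carrier_mat m n" and orth: "A\<^sup>T * A = 1\<^sub>m n" and w: "w \<in> carrier_vec m"
  shows "(w - A *\<^sub>v (A\<^sup>T *\<^sub>v w)) \<bullet> (w - A *\<^sub>v (A\<^sup>T *\<^sub>v w)) = w \<bullet> w - (A\<^sup>T *\<^sub>v w) \<bullet> (A\<^sup>T *\<^sub>v w)"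
proof -
  define p where "p = A\<^sup>T *\<^sub>v w"
  define q where "q = A *\<^sub>v p"
  have p: "p \<in> carrier_vec n" and q: "q \<in> carrier_vec m" unfolding p_def q_def using A w by auto
  have qq: "q \<bullet> q = p \<bullet> p" unfolding q_def by (rule orthonormal_cols_scalar_prod[OF A orth p])
  have wq: "w \<bullet> q = p \<bullet> p" unfolding q_def p_def using transpose_vec_mult_scalar[OF A p w] p_def by simp
  have qw: "q \<bullet> w = p \<bullet> p" using wq comm_scalar_prod[OF w q] by simp
  have "(w - q) \<bullet> (w - q) = w \<bullet> w - w \<bullet> q - (q \<bullet> w - q \<bullet> q)"
    using w q by (simp add: minus_scalar_prod_distrib[of _ m] scalar_prod_minus_distrib[of _ m])
  then show ?thesis using qq wq qw unfolding q_def p_def by simp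
qed

text \<open>If \<open>t \<ge> 1\<close> were an eigenvalue of \<open>CC\<^sup>T\<close> with eigenvector \<open>u\<close>, then \<open>A\<^sub>2u\<close> would coincide with its
  projection onto the range of \<open>A\<^sub>1\<close>, contradicting the full column rank of \<open>[A\<^sub>1 A\<^sub>2]\<close>.\<close>
lemma cross_gram_eigenvalue_lt_1:
  fixes A1 A2 :: "real mat"
  assumes A1: "A1 \<in> carrier_mat m n1" and A2: "A2 \<in> carrier_mat m n2"
    and fullrank: "vec_space.rank m (hcat A1 A2) = n1 + n2"
    and orth1: "A1\<^sup>T * A1 = 1\<^sub>m n1" and orth2: "A2\<^sup>T * A2 = 1\<^sub>m n2"
    and ev: "eigenvalue ((A2\<^sup>T * A1) * (A2\<^sup>T * A1)\<^sup>T) t"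
  shows "t < 1"
proof (rule ccontr)
  assume "\<not> t < 1"
  define C where "C = A2\<^sup>T * A1"
  have C: "C \<in> carrier_mat n2 n1" unfolding C_def using A1 A2 by auto
  obtain u where u: "u \<in> carrier_vec n2" "u \<noteq> 0\<^sub>v n2" and ev: "(C * C\<^sup>T) *\<^sub>v u = t \<cdot>\<^sub>v u"
    using ev A1 A2 unfolding eigenvalue_def eigenvector_def C_def by auto
  define w where "w = A2 *\<^sub>v u"
  define p where "p = A1\<^sup>T *\<^sub>v w"
  have w: "w \<in> carrier_vec m" and p: "p \<in> carrier_vec n1" unfolding w_def p_def using A1 A2 u by auto
  have pCu: "C\<^sup>T *\<^sub>v u = p"
    unfolding C_def p_def w_def using transpose_mult[of "A2\<^sup>T" n2 m A1 n1] A1 A2 u by simp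
  have "C *\<^sub>v p = t \<cdot>\<^sub>v u" using ev C u unfolding pCu[symmetric] by (subst assoc_mult_mat_vec[symmetric]) auto
  then have "p \<bullet> p = t * (u \<bullet> u)" using transpose_vec_mult_scalar[OF C p u(1)] pCu u by simp
  moreover have "w \<bullet> w = u \<bullet> u" unfolding w_def by (rule orthonormal_cols_scalar_prod[OF A2 orth2 u(1)])
  moreover have "1 * (u \<bullet> u) \<le> t * (u \<bullet> u)"
    using \<open>\<not> t < 1\<close> conjugate_square_ge_0_vec[of u] by (intro mult_right_mono) auto
  moreover have "(w - A1 *\<^sub>v p) \<bullet> (w - A1 *\<^sub>v p) \<ge> 0"
    using conjugate_square_ge_0_vec[of "w - A1 *\<^sub>v p"] by simp
  ultimately have "(w - A1 *\<^sub>v p) \<bullet> (w - A1 *\<^sub>v p) = 0"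
    using orthonormal_cols_projection_residual[OF A1 orth1 w] unfolding p_def by linarith
  then have "w - A1 *\<^sub>v p = 0\<^sub>v m" using scalar_prod_self_eq_zero[of "w - A1 *\<^sub>v p" m] w A1 p by simp
  moreover have "hcat A1 A2 *\<^sub>v ((-p) @\<^sub>v u) = w - A1 *\<^sub>v p"
    using hcat_mult[OF A1 A2, of "-p" u] A1 A2 p u unfolding w_def by (auto intro!: eq_vecI)
  ultimately have "(-p) @\<^sub>v u = 0\<^sub>v (n1+n2)"
    using vec_space.full_col_rank_mult_vec_eq_zero[OF hcat_carrier[OF A1 A2] fullrank] p u by simp
  with u p show False by (simp add: append_vec_eq_zero_iff)
qed

subsection \<open>Bounds on the spectral radius\<close>

lemma norm_le_rho_iterM:
  fixes C :: "real mat" and z :: complex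
  assumes C: "C \<in> carrier_mat n2 n1" and ev: "eigenvalue (C * C\<^sup>T) t" and t: "t \<noteq> 0"
    and g1: "g1 \<noteq> 0" and quad: "(z - 1 + of_real g1) * (z - 1 + of_real g2) = of_real (g1 * g2 * t) * z"
  shows "cmod z \<le> rho (iterM n1 n2 C g1 g2)"
proof -
  let ?C = "cmat C"
  have Cc: "?C \<in> carrier_mat n2 n1" and S: "C * C\<^sup>T \<in> carrier_mat n2 n2" using C by auto
  obtain u where u: "u \<in> carrier_vec n2" "u \<noteq> 0\<^sub>v n2" "(C * C\<^sup>T) *\<^sub>v u = t \<cdot>\<^sub>v u"
    using ev S unfolding eigenvalue_def eigenvector_def by auto
  define uc where "uc = map_vec complex_of_real u"
  have uc: "uc \<in> carrier_vec n2" "uc \<noteq> 0\<^sub>v n2" unfolding uc_def using u by auto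
  have "cmat (C * C\<^sup>T) *\<^sub>v uc = of_real t \<cdot>\<^sub>v uc"
    unfolding uc_def of_real_hom.mult_mat_vec_hom[OF S u(1), symmetric] u(3) of_real_hom.vec_hom_smult ..
  then have eig: "?C *\<^sub>v (?C\<^sup>T *\<^sub>v uc) = of_real t \<cdot>\<^sub>v uc"
    unfolding of_real_gram[OF C] using Cc uc by (subst assoc_mult_mat_vec[symmetric]) auto
  have "?C\<^sup>T *\<^sub>v uc \<noteq> 0\<^sub>v n1"
  proof
    assume "?C\<^sup>T *\<^sub>v uc = 0\<^sub>v n1"
    then have "of_real t \<cdot>\<^sub>v uc = 0\<^sub>v n2" using eig Cc by simp
    with t uc show False by (simp add: smult_vec_eq_zero_iff)
  qed
  then have "eigenvalue (iterMc n1 n2 ?C (of_real g1) (of_real g2)) z"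
    by (rule eigenvalue_iterMcI[OF Cc uc(1) eig]) (use g1 quad in simp_all)
  moreover have "n1 + n2 > 0" using u by (cases n2) auto
  ultimately show ?thesis
    unfolding rho_iterM[OF C] using spectral_radius_mem_max(2)[OF iterMc_carrier[OF Cc]]
    by (auto simp: spectrum_def)
qed

lemma rho_iterM_lower_bound:
  fixes C :: "real mat"
  assumes C: "C \<in> carrier_mat n2 n1"
    and ev1: "eigenvalue (C * C\<^sup>T) l1" and evr: "eigenvalue (C * C\<^sup>T) lr"
    and lr: "0 < lr" "lr \<le> l1" "l1 < 1" and g1: "1 \<le> g1" and g2: "1 \<le> g2"
  shows "(sqrt (1 - lr) - sqrt (1 - l1)) / (sqrt (1 - lr) + sqrt (1 - l1)) \<le> rho (iterM n1 n2 C g1 g2)"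
proof -
  define R where "R = rho (iterM n1 n2 C g1 g2)"
  define d where "d = (g1 - 1) * (g2 - 1)"
  define P where "P = g1 * g2"
  have roots: "cmod z \<le> R"
    if z: "z^2 - of_real (d + 1 - P * (1 - t)) * z + of_real d = 0" and t: "t \<in> {l1, lr}" for t z
  proof -
    have "(z - 1 + of_real g1) * (z - 1 + of_real g2) = of_real (g1 * g2 * t) * z"
      using z unfolding d_def P_def by (simp add: power2_eq_square algebra_simps)
    from norm_le_rho_iterM[OF C _ _ _ this] show ?thesis
      unfolding R_def using t ev1 evr lr g1 by auto
  qed
  note at_l1 = quadratic_roots_in_disc_imp[of "d + 1 - P * (1 - l1)" d R, OF roots[where t = l1, OF _ insertI1]]
  note at_lr = quadratic_roots_in_disc_imp[of "d + 1 - P * (1 - lr)" d R, OF roots[where t = lr, OF _ insertI2[OF singletonI]]]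
  have "0 \<le> R" using at_l1 by arith
  moreover have "0 < P" unfolding P_def using g1 g2 by simp
  ultimately show ?thesis unfolding R_def[symmetric]
    by (intro convergence_rate_le_of_quadratic_bounds) (use lr at_l1 at_lr in auto)
qed

lemma rho_iterM_upper_bound:
  fixes C :: "real mat"
  assumes C: "C \<in> carrier_mat n2 n1" and n: "n1 + n2 > 0"
    and g1: "1 \<le> g1" and g2: "1 \<le> g2" and v: "0 \<le> v" and d: "(g1 - 1) * (g2 - 1) = v^2"
    and disc: "\<And>t. lr \<le> t \<Longrightarrow> t \<le> l1 \<Longrightarrow> (v^2 + 1 - g1 * g2 * (1 - t))^2 \<le> 4 * v^2"
    and roots: "\<And>t. poly (char_poly (C * C\<^sup>T)) t = 0 \<Longrightarrow> t \<noteq> 0 \<Longrightarrow> lr \<le> t \<and> t \<le> l1"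
    and ker1: "(\<exists>x\<in>carrier_vec n1. x \<noteq> 0\<^sub>v n1 \<and> C *\<^sub>v x = 0\<^sub>v n2) \<Longrightarrow> \<bar>1 - g1\<bar> \<le> v"
    and ker2: "(\<exists>y\<in>carrier_vec n2. y \<noteq> 0\<^sub>v n2 \<and> C\<^sup>T *\<^sub>v y = 0\<^sub>v n1) \<Longrightarrow> \<bar>1 - g2\<bar> \<le> v"
  shows "rho (iterM n1 n2 C g1 g2) \<le> v"
proof -
  let ?M = "iterMc n1 n2 (cmat C) (of_real g1) (of_real g2)"
  have "?M \<in> carrier_mat (n1+n2) (n1+n2)" using C by (intro iterMc_carrier) auto
  from spectral_radius_mem_max(1)[OF this n] obtain z
    where z: "eigenvalue ?M z" "rho (iterM n1 n2 C g1 g2) = cmod z"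
    unfolding rho_iterM[OF C] spectrum_def by auto
  have cmod_1_minus: "cmod (1 - of_real g) = \<bar>1 - g\<bar>" for g
    by (metis norm_of_real of_real_1 of_real_diff)
  have g_nz: "complex_of_real g1 \<noteq> 0" "complex_of_real g2 \<noteq> 0" using g1 g2 by auto
  have "cmod z \<le> v"
    using eigenvalue_iterMc_cases[OF C g_nz z(1)]
  proof (elim disjE exE conjE)
    fix lam assume lam: "lam \<noteq> 0" "eigenvalue (cmat (C * C\<^sup>T)) lam"
      and quad: "(z - 1 + of_real g1) * (z - 1 + of_real g2) = of_real g1 * of_real g2 * lam * z"
    obtain t where t: "lam = of_real t" "poly (char_poly (C * C\<^sup>T)) t = 0"
      by (rule of_real_gram_eigenvalue[OF C lam(2)])
    with lam roots have range: "lr \<le> t" "t \<le> l1" by auto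
    have "z^2 - of_real (v^2 + 1 - g1 * g2 * (1 - t)) * z + of_real (v^2) = 0"
      using quad unfolding t(1) d[symmetric] by (simp add: power2_eq_square algebra_simps)
    from cmod_root_quadratic_nonpos_disc[OF this disc[OF range]] v show ?thesis by simp
  qed (use v ker1 ker2 cmod_1_minus in auto)
  then show ?thesis using z(2) by simp
qed

lemma rho_iterM_optimal:
  fixes C :: "real mat"
  assumes C: "C \<in> carrier_mat n2 n1" and n: "n1 + n2 > 0"
    and lr: "0 < lr" "lr \<le> l1" "l1 < 1"
    and roots: "\<And>t. poly (char_poly (C * C\<^sup>T)) t = 0 \<Longrightarrow> t \<noteq> 0 \<Longrightarrow> lr \<le> t \<and> t \<le> l1"
    and ker: "(\<forall>x\<in>carrier_vec n1. C *\<^sub>v x = 0\<^sub>v n2 \<longrightarrow> x = 0\<^sub>v n1) \<or>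
      (\<forall>y\<in>carrier_vec n2. C\<^sup>T *\<^sub>v y = 0\<^sub>v n1 \<longrightarrow> y = 0\<^sub>v n2)"
  obtains g1 g2 where "1 \<le> g1" "1 \<le> g2"
    "rho (iterM n1 n2 C g1 g2) \<le> (sqrt (1 - lr) - sqrt (1 - l1)) / (sqrt (1 - lr) + sqrt (1 - l1))"
proof -
  define v where "v = (sqrt (1 - lr) - sqrt (1 - l1)) / (sqrt (1 - lr) + sqrt (1 - l1))"
  obtain x y where xy: "0 \<le> x" "x \<le> v" "0 \<le> y" "x * y = v^2"
    and disc: "\<And>\<mu>. 1 - l1 \<le> \<mu> \<Longrightarrow> \<mu> \<le> 1 - lr \<Longrightarrow> (v^2 + 1 - (1 + x) * (1 + y) * \<mu>)^2 \<le> 4 * v^2"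
    using exists_factors_attaining_convergence_rate[of "1 - l1" "1 - lr"] lr unfolding v_def by auto
  have v: "0 \<le> v" using xy by linarith
  have disc': "(v^2 + 1 - g1 * g2 * (1 - t))^2 \<le> 4 * v^2"
    if "g1 * g2 = (1 + x) * (1 + y)" "lr \<le> t" "t \<le> l1" for g1 g2 t
    using disc[of "1 - t"] that by (simp add: mult.assoc)
  note upper = rho_iterM_upper_bound[OF C n _ _ v _ disc' roots]
  from ker show ?thesis
  proof
    assume "\<forall>x\<in>carrier_vec n1. C *\<^sub>v x = 0\<^sub>v n2 \<longrightarrow> x = 0\<^sub>v n1"
    then have "rho (iterM n1 n2 C (1 + y) (1 + x)) \<le> v"
      by (intro upper) (use xy in \<open>auto simp: mult.commute\<close>)
    with xy show ?thesis unfolding v_def by (intro that[of "1 + y" "1 + x"]) auto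
  next
    assume "\<forall>y\<in>carrier_vec n2. C\<^sup>T *\<^sub>v y = 0\<^sub>v n1 \<longrightarrow> y = 0\<^sub>v n2"
    then have "rho (iterM n1 n2 C (1 + x) (1 + y)) \<le> v"
      by (intro upper) (use xy in auto)
    with xy show ?thesis unfolding v_def by (intro that[of "1 + x" "1 + y"]) auto
  qed
qed

theorem mainTheorem14:
  fixes m n1 n2 :: nat and A1 A2 :: "real mat"
  assumes A1: "A1 \<in> carrier_mat m n1" and A2: "A2 \<in> carrier_mat m n2"
    and fullrank: "vec_space.rank m (hcat A1 A2) = n1 + n2"
    and orth1: "transpose_mat A1 * A1 = 1\<^sub>m n1"
    and orth2: "transpose_mat A2 * A2 = 1\<^sub>m n2"
    and Cnz: "transpose_mat A2 * A1 \<noteq> 0\<^sub>m n2 n1"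
    and rankC: "vec_space.rank n2 (transpose_mat A2 * A1) = min n1 n2"
  shows "let C = transpose_mat A2 * A1; r = min n1 n2;
             l1 = lambda_i (C * transpose_mat C) 1; lr = lambda_i (C * transpose_mat C) r;
             v = (sqrt (1 - lr) - sqrt (1 - l1)) / (sqrt (1 - lr) + sqrt (1 - l1))
         in (\<exists>g1 g2. 1 \<le> g1 \<and> 1 \<le> g2 \<and> rho (iterM n1 n2 C g1 g2) = v) \<and>
            (\<forall>g1 g2. 1 \<le> g1 \<longrightarrow> 1 \<le> g2 \<longrightarrow> v \<le> rho (iterM n1 n2 C g1 g2))"
proof -
  define C where "C = A2\<^sup>T * A1"
  define l1 where "l1 = lambda_i (C * C\<^sup>T) 1"
  define lr where "lr = lambda_i (C * C\<^sup>T) (min n1 n2)"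
  have C: "C \<in> carrier_mat n2 n1" unfolding C_def using A1 A2 by auto
  have "n1 \<noteq> 0" "n2 \<noteq> 0" using Cnz C unfolding C_def[symmetric] by (auto intro!: eq_matI)
  then have r: "min n1 n2 \<noteq> 0" by simp
  note spec = gram_eigenvalue_extremes[OF C rankC[folded C_def] r, folded l1_def lr_def]
  have l1: "l1 < 1"
    using cross_gram_eigenvalue_lt_1[OF A1 A2 fullrank orth1 orth2 spec(3)[unfolded C_def]]
    unfolding l1_def C_def .
  have ker: "(\<forall>x\<in>carrier_vec n1. C *\<^sub>v x = 0\<^sub>v n2 \<longrightarrow> x = 0\<^sub>v n1) \<or>
      (\<forall>y\<in>carrier_vec n2. C\<^sup>T *\<^sub>v y = 0\<^sub>v n1 \<longrightarrow> y = 0\<^sub>v n2)"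
    using min_rank_kernels_trivial[OF C rankC[folded C_def]] by linarith
  obtain g1 g2 where "1 \<le> g1" "1 \<le> g2"
    "rho (iterM n1 n2 C g1 g2) \<le> (sqrt (1 - lr) - sqrt (1 - l1)) / (sqrt (1 - lr) + sqrt (1 - l1))"
    by (rule rho_iterM_optimal[OF C _ spec(1,2) l1 spec(5) ker]) (use r in auto)
  then show ?thesis
    unfolding Let_def C_def[symmetric] l1_def[symmetric] lr_def[symmetric]
    using rho_iterM_lower_bound[OF C spec(3,4,1,2) l1] by (blast intro: antisym)
qed

end
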